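(* Let $R\subset\mathbb C_p$ be the ring of integers of a finite extension of $\mathbb Q_p$ with ramification index $e$ and uniformizer $\pi$, containing all $p$-power roots of unity needed below (or work after extending scalars). Let $(G_n)_{n\ge1}$ be finite abelian groups, $\nu\in\Lambda^{\mathrm{hor}}_R=R[[\prod_n G_n]]$, $m\ge1$, and surjections $\rho_n:G_n\to\mathbb Z/p^m$; let $\rho(\nu)\in\Lambda^{\mathrm{dig}}_{R,m}$ be the pushforward of $\nu$ under $\prod_n\rho_n:\prod_nG_n\to(\mathbb Z/p^m)^{\mathbb N}$. Let $f_{\nu,m}(T)\in R[[T]]$ be the Amice transform of $d_{\infty,m}(\rho(\nu))$ and let $\mu\in\mathbb Z_{\ge0}\cup\{\infty\}$, $\lambda\in\mathbb Z_{\ge0}$ be its Weierstrass $\mu$- and $\lambda$-invariants. Fix compatible primitive $p$-power roots of unity $\zeta_{p^k}$ ($\zeta_{p^{k+1}}^p=\zeta_{p^k}$) and let $\chi_0$ be the character of $\mathbb Z/p^m$ with $\chi_0(1)=\zeta_{p^m}$. For $n\ge1$ put $$S_n=\frac{1}{p^{mn}}\sum_{(\chi_i)\in\widehat{\mathbb Z/p^m}^{\,n}}\left(\prod_{i=1}^nu_{m,n-i}(\chi_i)\right)\rho(\nu)(\chi_1,\ldots,\chi_n,\chi_0),\qquad u_{m,n-i}(\chi_i)=\frac{\zeta_{p^{m(n-i+2)}}-1}{\zeta_{p^{m(n-i+2)}}\overline{\chi_i(1)}-1}.$$ If $\rho(\nu)\ne0$ then $\mu<\infty$ and for all sufficiently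 large $n$, $$v_p(S_n)=\frac{\mu}{e}-\frac{1}{p^m-p^{m-1}}+\frac{\lambda+1}{p^{m(n+1)}-p^{m(n+1)-1}}.$$ If $\rho(\nu)=0$ then $\mu=\infty$ and $S_n=0$ for all $n$.
   Context: For finite abelian groups $G_n$, the horizontal Iwasawa algebra is $\Lambda^{\mathrm{hor}}_R=R[[\prod_nG_n]]=\varprojlim_{A\subset\mathbb N\text{ finite}}R[\prod_{n\in A}G_n]$. The $p^m$-adic digit algebra is $\Lambda^{\mathrm{dig}}_{R,m}=\varprojlim_nR[(\mathbb Z/p^m)^n]$ (projections forgetting the last factor), i.e. $R$-valued measures on $(\mathbb Z/p^m)^{\mathbb N}$; for characters $\chi_j$ of $\mathbb Z/p^m$, $\rho(\nu)(\chi_1,\ldots,\chi_k)=\int\prod_{j\le k}\chi_j(a_j)\,d\rho(\nu)(a)$. The $p^m$-adic digit map $d_{\infty,m}:(\mathbb Z/p^m)^{\mathbb N}\to\mathbb Z_p$, $(a_i)\mapsto\sum_{i\ge1}\tilde a_ip^{m(i-1)}$ ($\tilde a_i\in\{0,\dots,p^m-1\}$), is a homeomorphism and induces by pushforward an $R$-module isomorphism $\Lambda^{\mathrm{dig}}_{R,m}\to R[[\mathbb Z_p]]$. The Amice transform sends $\mu\in R[[\mathbb Z_p]]$ to $\sum_{k\ge0}\mu(\binom{x}{k})T^k\in R[[T]]$. Weierstrass invariants: a nonzero $f\in R[[T]]$ factors uniquely as $\pi^{\mu(f)}g(T)u(T)$ with $u\in R[[T]]^\times$, $g$ monic of degree $\lambda(f)$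 with non-leading coefficients in $(\pi)$; for $f=0$ set $\mu=\infty,\lambda=0$. $v_p$ is normalized by $v_p(p)=1$, and $\overline{\chi}=\chi^{-1}$. *)

theory Defs
  imports "HOL-Algebra.Elementary_Groups" "HOL-Computational_Algebra.Polynomial_FPS"
    "HOL-Library.Extended_Real" "HOL-Library.Extended_Nat"
begin

definition valuation :: "('a::field \<Rightarrow> ereal) \<Rightarrow> bool" where
  "valuation v \<longleftrightarrow>
     (\<forall>x. v x = \<infinity> \<longleftrightarrow> x = 0) \<and> (\<forall>x. v x \<noteq> -\<infinity>) \<and>
     (\<forall>x y. v (x * y) = v x + v y) \<and>
     (\<forall>x y. min (v x) (v y) \<le> v (x + y))"

definition vconv :: "('a::field \<Rightarrow> ereal) \<Rightarrow> (nat \<Rightarrow> 'a) \<Rightarrow> 'a \<Rightarrow> bool" where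
  "vconv v X c \<longleftrightarrow> (\<forall>M::real. \<exists>N. \<forall>n\<ge>N. ereal M \<le> v (X n - c))"

definition vcomplete :: "('a::field \<Rightarrow> ereal) \<Rightarrow> bool" where
  "vcomplete v \<longleftrightarrow> (\<forall>X. (\<forall>M::real. \<exists>N. \<forall>n\<ge>N. \<forall>k\<ge>N. ereal M \<le> v (X n - X k))
                        \<longrightarrow> (\<exists>c. vconv v X c))"

definition alg_closed_field :: "'a::field itself \<Rightarrow> bool" where
  "alg_closed_field _ \<longleftrightarrow> (\<forall>q :: 'a poly. 0 < degree q \<longrightarrow> (\<exists>x. poly q x = 0))"

definition Cp_like :: "nat \<Rightarrow> ('a::field_char_0 \<Rightarrow> ereal) \<Rightarrow> bool" where
  "Cp_like p v \<longleftrightarrow> prime p \<and> valuation v \<and> v (of_nat p) = 1 \<and> vcomplete v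
                   \<and> alg_closed_field TYPE('a)"

definition Qp_in :: "('a::field_char_0 \<Rightarrow> ereal) \<Rightarrow> 'a set" where
  "Qp_in v = {x. \<exists>X. (\<forall>n. X n \<in> \<rat>) \<and> vconv v X x}"

definition subfield_of :: "'a::field set \<Rightarrow> bool" where
  "subfield_of K \<longleftrightarrow> 0 \<in> K \<and> 1 \<in> K \<and> (\<forall>x\<in>K. \<forall>y\<in>K. x + y \<in> K \<and> x * y \<in> K)
     \<and> (\<forall>x\<in>K. - x \<in> K \<and> inverse x \<in> K)"

definition finite_ext_Qp :: "('a::field_char_0 \<Rightarrow> ereal) \<Rightarrow> 'a set \<Rightarrow> bool" where
  "finite_ext_Qp v K \<longleftrightarrow> subfield_of K \<and> Qp_in v \<subseteq> K \<and>
     (\<exists>B. finite B \<and> B \<subseteq> K \<and>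
          (\<forall>x\<in>K. \<exists>c. (\<forall>b\<in>B. c b \<in> Qp_in v) \<and> x = (\<Sum>b\<in>B. c b * b)))"

definition int_ring :: "('a::field \<Rightarrow> ereal) \<Rightarrow> 'a set \<Rightarrow> 'a set" where
  "int_ring v K = {x\<in>K. 0 \<le> v x}"

text \<open>pi is a uniformizer of the ring of integers of K, and e is the ramification index
  (p = pi^e * unit, i.e. e * v(pi) = v(p) = 1).\<close>
definition uniformizer :: "('a::field \<Rightarrow> ereal) \<Rightarrow> 'a set \<Rightarrow> 'a \<Rightarrow> bool" where
  "uniformizer v K \<pi> \<longleftrightarrow> \<pi> \<in> K \<and> 0 < v \<pi> \<and> (\<forall>x\<in>K. 0 < v x \<longrightarrow> v \<pi> \<le> v x)"

definition ram_index :: "('a::field \<Rightarrow> ereal) \<Rightarrow> 'a \<Rightarrow> nat \<Rightarrow> bool" where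
  "ram_index v \<pi> e \<longleftrightarrow> 0 < e \<and> v \<pi> = ereal (1 / real e)"

text \<open>Compatible primitive p-power roots of unity zeta k = zeta_{p^k}.\<close>
definition compatible_roots :: "nat \<Rightarrow> (nat \<Rightarrow> 'a::field) \<Rightarrow> bool" where
  "compatible_roots p \<zeta> \<longleftrightarrow>
     (\<forall>k. \<zeta> k ^ (p ^ k) = 1 \<and> (\<forall>j. 0 < j \<and> j < p ^ k \<longrightarrow> \<zeta> k ^ j \<noteq> 1)) \<and>
     (\<forall>k. \<zeta> (Suc k) ^ p = \<zeta> k)"

text \<open>An element of the horizontal Iwasawa algebra R[[prod_{n>=1} G_n]], as a compatible
  family of R-valued functions on prod_{n in A} G_n, A finite subset of {1,2,...}.\<close>
definition hor_elem ::
  "'a set \<Rightarrow> (nat \<Rightarrow> ('g, 'b) monoid_scheme) \<Rightarrow> (nat set \<Rightarrow> (nat \<Rightarrow> 'g) \<Rightarrow> 'a::comm_ring_1) \<Rightarrow> bool"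
  where
  "hor_elem R G \<nu> \<longleftrightarrow>
     (\<forall>A. finite A \<and> A \<subseteq> {1..} \<longrightarrow> (\<forall>x\<in>PiE A (\<lambda>n. carrier (G n)). \<nu> A x \<in> R)) \<and>
     (\<forall>A B. finite B \<and> A \<subseteq> B \<and> B \<subseteq> {1..} \<longrightarrow>
        (\<forall>x\<in>PiE A (\<lambda>n. carrier (G n)).
           \<nu> A x = (\<Sum>y\<in>{y\<in>PiE B (\<lambda>n. carrier (G n)). restrict y A = x}. \<nu> B y)))"

text \<open>Digit tuples: elements of (Z/p^m)^n, indexed by {1..n}, represented by {0..<p^m}.\<close>
definition digits :: "nat \<Rightarrow> nat \<Rightarrow> nat \<Rightarrow> (nat \<Rightarrow> int) set" where
  "digits p m n = PiE {1..n} (\<lambda>_. {0..<int (p ^ m)})"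

text \<open>Pushforward rho(nu) in Lambda^dig_{R,m}: its level-n component on (Z/p^m)^n.\<close>
definition push_dig ::
  "(nat \<Rightarrow> ('g, 'b) monoid_scheme) \<Rightarrow> (nat \<Rightarrow> 'g \<Rightarrow> int) \<Rightarrow> (nat set \<Rightarrow> (nat \<Rightarrow> 'g) \<Rightarrow> 'a::comm_ring_1)
    \<Rightarrow> nat \<Rightarrow> (nat \<Rightarrow> int) \<Rightarrow> 'a" where
  "push_dig G \<rho> \<nu> n a =
     (\<Sum>g\<in>{g\<in>PiE {1..n} (\<lambda>i. carrier (G i)). \<forall>i\<in>{1..n}. \<rho> i (g i) = a i}. \<nu> {1..n} g)"

text \<open>Characters of Z/N with values in the field, as N-periodic homomorphisms Z -> 'a^*.\<close>
definition chars :: "nat \<Rightarrow> (int \<Rightarrow> 'a::field) set" where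
  "chars N = {\<chi>. \<chi> 0 = 1 \<and> (\<forall>a b. \<chi> (a + b) = \<chi> a * \<chi> b) \<and> (\<forall>a. \<chi> (a + int N) = \<chi> a)}"

text \<open>rho(nu)(chi_1,...,chi_k) = integral of prod_{j<=k} chi_j(a_j) d rho(nu)(a).\<close>
definition dig_char_int ::
  "nat \<Rightarrow> nat \<Rightarrow> (nat \<Rightarrow> (nat \<Rightarrow> int) \<Rightarrow> 'a::field) \<Rightarrow> nat \<Rightarrow> (nat \<Rightarrow> int \<Rightarrow> 'a) \<Rightarrow> 'a" where
  "dig_char_int p m \<mu> k \<chi> = (\<Sum>a\<in>digits p m k. (\<Prod>j=1..k. \<chi> j (a j)) * \<mu> k a)"

definition digit_val :: "nat \<Rightarrow> nat \<Rightarrow> nat \<Rightarrow> (nat \<Rightarrow> int) \<Rightarrow> nat" where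
  "digit_val p m n a = (\<Sum>i=1..n. nat (a i) * p ^ (m * (i - 1)))"

text \<open>Pushforward d_{infinity,m}(rho(nu)) in R[[Z_p]], level N component on Z/p^N
  (represented by {0..<p^N}): the mass of x + p^N Z_p.  The first ceil(N/m) digits determine
  the image modulo p^N.\<close>
definition push_Zp :: "nat \<Rightarrow> nat \<Rightarrow> (nat \<Rightarrow> (nat \<Rightarrow> int) \<Rightarrow> 'a::comm_ring_1) \<Rightarrow> nat \<Rightarrow> nat \<Rightarrow> 'a" where
  "push_Zp p m \<mu> N x =
     (let n = (N + m - 1) div m in
      (\<Sum>a\<in>{a\<in>digits p m n. digit_val p m n a mod p ^ N = x}. \<mu> n a))"

definition Zp_integral ::
  "nat \<Rightarrow> ('a::field \<Rightarrow> ereal) \<Rightarrow> (nat \<Rightarrow> nat \<Rightarrow> 'a) \<Rightarrow> (nat \<Rightarrow> 'a) \<Rightarrow> 'a" where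
  "Zp_integral p v \<mu> f = (THE c. vconv v (\<lambda>N. \<Sum>x<p ^ N. f x * \<mu> N x) c)"

definition amice :: "nat \<Rightarrow> ('a::field \<Rightarrow> ereal) \<Rightarrow> (nat \<Rightarrow> nat \<Rightarrow> 'a) \<Rightarrow> 'a fps" where
  "amice p v \<mu> = Abs_fps (\<lambda>k. Zp_integral p v \<mu> (\<lambda>x. of_nat (x choose k)))"

definition in_RT :: "'a set \<Rightarrow> 'a::comm_ring_1 fps \<Rightarrow> bool" where
  "in_RT R f \<longleftrightarrow> (\<forall>k. fps_nth f k \<in> R)"

definition weierstrass_fact :: "'a set \<Rightarrow> 'a::comm_ring_1 \<Rightarrow> 'a fps \<Rightarrow> nat \<Rightarrow> nat \<Rightarrow> bool" where
  "weierstrass_fact R \<pi> f mu lam \<longleftrightarrow>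
     (\<exists>g u w. in_RT R u \<and> in_RT R w \<and> u * w = 1 \<and>
        degree g = lam \<and> lead_coeff g = 1 \<and>
        (\<forall>i<lam. \<exists>r\<in>R. coeff g i = \<pi> * r) \<and>
        f = fps_const (\<pi> ^ mu) * fps_of_poly g * u)"

definition weier_mu :: "'a set \<Rightarrow> 'a::comm_ring_1 \<Rightarrow> 'a fps \<Rightarrow> enat" where
  "weier_mu R \<pi> f = (if f = 0 then \<infinity> else enat (THE mu. \<exists>lam. weierstrass_fact R \<pi> f mu lam))"

definition weier_lambda :: "'a set \<Rightarrow> 'a::comm_ring_1 \<Rightarrow> 'a fps \<Rightarrow> nat" where
  "weier_lambda R \<pi> f = (if f = 0 then 0 else (THE lam. \<exists>mu. weierstrass_fact R \<pi> f mu lam))"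

definition u_fac :: "nat \<Rightarrow> (nat \<Rightarrow> 'a::field) \<Rightarrow> nat \<Rightarrow> (int \<Rightarrow> 'a) \<Rightarrow> 'a" where
  "u_fac m \<zeta> j \<chi> = (\<zeta> (m * (j + 2)) - 1) / (\<zeta> (m * (j + 2)) * inverse (\<chi> 1) - 1)"

definition S_sum ::
  "nat \<Rightarrow> nat \<Rightarrow> (nat \<Rightarrow> 'a::field) \<Rightarrow> (nat \<Rightarrow> (nat \<Rightarrow> int) \<Rightarrow> 'a) \<Rightarrow> nat \<Rightarrow> 'a" where
  "S_sum p m \<zeta> \<mu> n =
     (let \<chi>0 = (\<lambda>a::int. \<zeta> m powi a) in
      (1 / of_nat (p ^ (m * n))) *
      (\<Sum>\<chi>\<in>PiE {1..n} (\<lambda>_. chars (p ^ m)).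
         (\<Prod>i=1..n. u_fac m \<zeta> (n - i) (\<chi> i)) * dig_char_int p m \<mu> (n + 1) (\<chi>(n + 1 := \<chi>0))))"

end

theory Submission
  imports Defs
begin

text \<open>
  The Amice transform \<open>f\<close> of the digit measure has its coefficients in \<open>\<O>\<close>, being limits of
  Riemann sums in the closed ring \<open>\<O>\<close>, so Weierstrass preparation writes \<open>f = \<pi>^\<mu> g u\<close>.
  By orthogonality of characters, \<open>S n\<close> collapses to an explicit product of quotients of
  \<open>\<zeta> k - 1\<close>'s times the integral of \<open>(1 + z)^x\<close> against the level \<open>n + 1\<close> measure, where
  \<open>z = \<zeta> (m (n + 1)) - 1\<close>. That integral is approximated by the truncations of \<open>f(z)\<close>, in which
  the monomial of degree \<open>\<lambda>\<close> dominates as soon as \<open>\<lambda> v(z) < 1/e\<close>; together with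
  \<open>v (\<zeta> k - 1) = 1 / (p^k - p^(k-1))\<close> the valuations telescope to the stated formula.
  Conversely, if \<open>f = 0\<close> then all these integrals vanish, and Fourier inversion on \<open>\<int>/p^(m n)\<close>
  shows that the measure is zero.
\<close>

section \<open>Valued fields\<close>

lemma ereal_add_le: "ereal a \<le> x \<Longrightarrow> ereal b \<le> y \<Longrightarrow> ereal (a + b) \<le> x + y"
  using add_mono[of "ereal a" x "ereal b" y] by simp

lemma ereal_le_minus: "ereal (a + b) \<le> x \<Longrightarrow> ereal a \<le> x - ereal b"
  by (cases x) auto

lemma ereal_less_minus: "x < ereal (a + b) \<Longrightarrow> x - ereal b < ereal a"
  by (cases x) auto

locale valued_field =
  fixes v :: "'a::field \<Rightarrow> ereal"
  assumes valuation: "valuation v"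
begin

lemma v_eq_infinity_iff: "v x = \<infinity> \<longleftrightarrow> x = 0"
  using valuation unfolding valuation_def by blast

lemma v_zero [simp]: "v 0 = \<infinity>"
  using v_eq_infinity_iff by blast

lemma v_neq_minf [simp]: "v x \<noteq> -\<infinity>"
  using valuation unfolding valuation_def by blast

lemma v_mult: "v (x * y) = v x + v y"
  using valuation unfolding valuation_def by blast

lemma v_add: "min (v x) (v y) \<le> v (x + y)"
  using valuation unfolding valuation_def by blast

lemma v_finite: "x \<noteq> 0 \<Longrightarrow> \<exists>r. v x = ereal r"
  using v_eq_infinity_iff[of x] v_neq_minf[of x] by (cases "v x") auto

lemma v_one [simp]: "v 1 = 0"
proof -
  obtain r where "v 1 = ereal r" using v_finite[of 1] by auto
  moreover have "v 1 = v 1 + v 1" using v_mult[of 1 1] by simp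
  ultimately show ?thesis by (simp add: zero_ereal_def)
qed

lemma v_minus_one [simp]: "v (-1) = 0"
proof -
  obtain r where "v (-1) = ereal r" using v_finite[of "-1"] by auto
  moreover have "v 1 = v (-1) + v (-1)" using v_mult[of "-1" "-1"] by simp
  ultimately show ?thesis by (simp add: zero_ereal_def)
qed

lemma v_uminus [simp]: "v (- x) = v x"
  using v_mult[of "-1" x] by simp

lemma v_minus_commute: "v (a - b) = v (b - a)"
  by (metis minus_diff_eq v_uminus)

lemma v_inverse: "x \<noteq> 0 \<Longrightarrow> v (inverse x) = - v x"
proof -
  assume "x \<noteq> 0"
  then obtain r s where "v x = ereal r" "v (inverse x) = ereal s"
    using v_finite[of x] v_finite[of "inverse x"] by auto
  moreover have "v 1 = v x + v (inverse x)" using v_mult[of x "inverse x"] \<open>x \<noteq> 0\<close> by simp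
  ultimately show ?thesis by (simp add: zero_ereal_def)
qed

lemma v_divide: "y \<noteq> 0 \<Longrightarrow> v (x / y) = v x - v y"
  using v_mult[of x "inverse y"] v_inverse[of y] by (simp add: divide_inverse minus_ereal_def)

lemma v_add_ge: "c \<le> v x \<Longrightarrow> c \<le> v y \<Longrightarrow> c \<le> v (x + y)"
  using v_add[of x y] by (meson min.bounded_iff order_trans)

lemma v_diff_ge: "c \<le> v x \<Longrightarrow> c \<le> v y \<Longrightarrow> c \<le> v (x - y)"
  using v_add_ge[of c x "-y"] by simp

lemma v_sum_ge: "(\<And>i. i \<in> A \<Longrightarrow> c \<le> v (f i)) \<Longrightarrow> c \<le> v (sum f A)"
  by (induction A rule: infinite_finite_induct) (simp_all add: v_add_ge)

lemma v_add_strict: "v x < v y \<Longrightarrow> v (x + y) = v x"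
proof -
  assume less: "v x < v y"
  have "min (v (x + y)) (v y) \<le> v x" using v_add[of "x + y" "-y"] by simp
  then have "v (x + y) \<le> v x" using less by (auto simp: min_def split: if_splits)
  with v_add[of x y] less show ?thesis by simp
qed

lemma v_of_nat_ge: "0 \<le> v (of_nat n)"
  by (induction n) (auto intro!: v_add_ge)

lemma v_of_int_ge: "0 \<le> v (of_int z)"
proof (cases "z \<ge> 0")
  case True then show ?thesis using v_of_nat_ge[of "nat z"] by simp
next
  case False then show ?thesis using v_of_nat_ge[of "nat (- z)"]
    by (metis add.inverse_inverse nat_0_le neg_0_le_iff_le nle_le of_int_minus of_int_of_nat_eq v_uminus)
qed

lemma v_power: "v x = ereal r \<Longrightarrow> v (x ^ n) = ereal (real n * r)"
  by (induction n) (simp_all add: v_mult algebra_simps)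

lemma v_power_nonneg: "0 \<le> v x \<Longrightarrow> 0 \<le> v (x ^ n)"
  by (induction n) (auto simp: v_mult)

lemma v_power_ge: "ereal s \<le> v z \<Longrightarrow> ereal (real k * s) \<le> v (z ^ k)"
proof (induction k)
  case (Suc k)
  have "ereal (s + real k * s) \<le> v z + v (z ^ k)" using Suc by (intro ereal_add_le) auto
  then show ?case by (simp add: v_mult algebra_simps)
qed simp

lemma v_prod: "finite A \<Longrightarrow> v (prod f A) = (\<Sum>i\<in>A. v (f i))"
  by (induction A rule: finite_induct) (auto simp: v_mult)

lemma zero_if_v_unbounded: "(\<And>M. ereal M \<le> v x) \<Longrightarrow> x = 0"
  by (metis ereal_less_eq(2) ereal_top v_eq_infinity_iff)

lemma v_unit_eq_zero:
  assumes "x * y = 1" and "0 \<le> v x" and "0 \<le> v y"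
  shows "v x = 0"
proof -
  have "x \<noteq> 0" "y \<noteq> 0" using assms(1) by auto
  then obtain a b where "v x = ereal a" "v y = ereal b" using v_finite by metis
  moreover have "v x + v y = 0" using assms(1) v_mult by (metis v_one)
  ultimately show ?thesis using assms(2,3) by (simp add: zero_ereal_def)
qed

lemma v_root_of_unity: "w ^ n = 1 \<Longrightarrow> n > 0 \<Longrightarrow> v w = 0"
proof -
  assume w: "w ^ n = 1" "n > 0"
  then have "w \<noteq> 0" by (cases "w = 0") (auto simp: power_0_left)
  then obtain r where r: "v w = ereal r" using v_finite by blast
  have "ereal (real n * r) = 0" using v_power[OF r, of n] w by simp
  then show ?thesis using r w by (simp add: zero_ereal_def)
qed

lemma v_power_minus_one_ge: "0 \<le> v x \<Longrightarrow> v (x - 1) \<le> v (x ^ n - 1)"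
proof -
  assume x: "0 \<le> v x"
  have "0 \<le> v (sum ((^) x) {..<n})" using x by (intro v_sum_ge v_power_nonneg) auto
  then have "v (x - 1) + 0 \<le> v (x - 1) + v (sum ((^) x) {..<n})" by (intro add_left_mono)
  then show ?thesis by (simp add: power_diff_1_eq v_mult)
qed

lemma v_root_of_unity_power_minus_one:
  assumes w: "w ^ N = 1" "N > 0" and cop: "coprime b N"
  shows "v (w ^ b - 1) = v (w - 1)"
proof -
  have vw: "v w = 0" using v_root_of_unity w by blast
  have "v (w ^ b - 1) \<le> v (w - 1)"
  proof (cases "N = 1")
    case True then show ?thesis using w by simp
  next
    case False
    \<comment> \<open>\<open>w\<close> is itself a power of \<open>w ^ b\<close>\<close>
    obtain x y where "b * x = N * y + 1" using coprime_bezout_strong[OF cop False] by blast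
    then have "(w ^ b) ^ x = w" using w(1) by (simp add: power_mult[symmetric] power_add power_mult)
    then show ?thesis using v_power_minus_one_ge[of "w ^ b" x] v_power_nonneg vw by simp
  qed
  with v_power_minus_one_ge vw show ?thesis by (simp add: order_antisym)
qed

lemma v_prod_diff_ge:
  fixes k :: nat
  shows "(\<And>i. i < k \<Longrightarrow> 0 \<le> v (a i) \<and> 0 \<le> v (b i) \<and> c \<le> v (a i - b i))
   \<Longrightarrow> c \<le> v ((\<Prod>i<k. a i) - (\<Prod>i<k. b i))"
proof (induction k)
  case (Suc k)
  have IH: "c \<le> v ((\<Prod>i<k. a i) - (\<Prod>i<k. b i))" using Suc by auto
  have ak: "0 \<le> v (a k)" "0 \<le> v (b k)" "c \<le> v (a k - b k)" using Suc.prems[of k] by auto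
  have pb: "0 \<le> v (\<Prod>i<k. b i)" using Suc.prems by (induction k) (auto simp: v_mult)
  have "(\<Prod>i<Suc k. a i) - (\<Prod>i<Suc k. b i)
      = ((\<Prod>i<k. a i) - (\<Prod>i<k. b i)) * a k + (\<Prod>i<k. b i) * (a k - b k)"
    by (simp add: algebra_simps)
  moreover have "c + 0 \<le> v ((\<Prod>i<k. a i) - (\<Prod>i<k. b i)) + v (a k)" using IH ak by (intro add_mono)
  moreover have "0 + c \<le> v (\<Prod>i<k. b i) + v (a k - b k)" using pb ak by (intro add_mono)
  ultimately show ?case by (simp add: v_mult v_add_ge)
qed simp

lemma vconv_const: "vconv v (\<lambda>n. c) c"
  unfolding vconv_def by simp

lemma vconv_unique: "vconv v X c \<Longrightarrow> vconv v X d \<Longrightarrow> c = d"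
proof -
  assume a: "vconv v X c" "vconv v X d"
  have "ereal M \<le> v (c - d)" for M
  proof -
    obtain N1 where N1: "\<forall>n\<ge>N1. ereal M \<le> v (X n - c)" using a(1) unfolding vconv_def by blast
    obtain N2 where N2: "\<forall>n\<ge>N2. ereal M \<le> v (X n - d)" using a(2) unfolding vconv_def by blast
    have "ereal M \<le> v ((X (max N1 N2) - d) - (X (max N1 N2) - c))"
      by (rule v_diff_ge) (use N1 N2 in auto)
    then show ?thesis by simp
  qed
  then show "c = d" using zero_if_v_unbounded[of "c - d"] by simp
qed

lemma vconv_add: "vconv v X c \<Longrightarrow> vconv v Y d \<Longrightarrow> vconv v (\<lambda>n. X n + Y n) (c + d)"
  unfolding vconv_def
proof (intro allI)
  fix M :: real
  assume a: "\<forall>M. \<exists>N. \<forall>n\<ge>N. ereal M \<le> v (X n - c)" "\<forall>M. \<exists>N. \<forall>n\<ge>N. ereal M \<le> v (Y n - d)"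
  obtain N1 where N1: "\<forall>n\<ge>N1. ereal M \<le> v (X n - c)" using a(1) by blast
  obtain N2 where N2: "\<forall>n\<ge>N2. ereal M \<le> v (Y n - d)" using a(2) by blast
  have "ereal M \<le> v (X n + Y n - (c + d))" if "max N1 N2 \<le> n" for n
  proof -
    have "ereal M \<le> v ((X n - c) + (Y n - d))" using N1 N2 that by (intro v_add_ge) auto
    then show ?thesis by (simp add: algebra_simps)
  qed
  then show "\<exists>N. \<forall>n\<ge>N. ereal M \<le> v (X n + Y n - (c + d))" by blast
qed

lemma vconv_uminus: "vconv v X c \<Longrightarrow> vconv v (\<lambda>n. - X n) (- c)"
proof -
  have "v (- X n - - c) = v (X n - c)" for n
    using v_uminus[of "X n - c"] by simp
  then show "vconv v X c \<Longrightarrow> vconv v (\<lambda>n. - X n) (- c)" unfolding vconv_def by simp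
qed

lemma vconv_diff: "vconv v X c \<Longrightarrow> vconv v Y d \<Longrightarrow> vconv v (\<lambda>n. X n - Y n) (c - d)"
  using vconv_add[of X c "\<lambda>n. - Y n" "- d"] vconv_uminus[of Y d] by simp

lemma vconv_bounded_below: "vconv v X c \<Longrightarrow> \<exists>B N. \<forall>n\<ge>N. ereal B \<le> v (X n)"
proof -
  assume X: "vconv v X c"
  obtain N where N: "\<forall>n\<ge>N. ereal 0 \<le> v (X n - c)" using X unfolding vconv_def by blast
  obtain r where r: "ereal r \<le> v c"
  proof (cases "c = 0")
    case False
    then obtain r where "v c = ereal r" using v_finite by blast
    then show thesis using that[of r] by simp
  qed (use that[of 0] in simp)
  have "ereal (min r 0) \<le> v ((X n - c) + c)" if "N \<le> n" for n
    using N that r by (intro v_add_ge) (auto intro: order_trans[rotated])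
  then show ?thesis by (intro exI[of _ "min r 0"] exI[of _ N]) auto
qed

lemma vconv_cmult: "vconv v X c \<Longrightarrow> vconv v (\<lambda>n. a * X n) (a * c)"
proof (cases "a = 0")
  case True then show ?thesis by (simp add: vconv_const)
next
  case False
  assume X: "vconv v X c"
  obtain r where r: "v a = ereal r" using v_finite[OF False] by blast
  show ?thesis unfolding vconv_def
  proof
    fix M :: real
    obtain N where N: "\<forall>n\<ge>N. ereal (M - r) \<le> v (X n - c)" using X unfolding vconv_def by blast
    have "ereal M \<le> v (a * X n - a * c)" if "N \<le> n" for n
    proof -
      have "ereal (r + (M - r)) \<le> v a + v (X n - c)" using N r that by (intro ereal_add_le) auto
      then show ?thesis by (simp add: v_mult[symmetric] algebra_simps)
    qed
    then show "\<exists>N. \<forall>n\<ge>N. ereal M \<le> v (a * X n - a * c)" by blast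
  qed
qed

lemma vconv_mult: "vconv v X c \<Longrightarrow> vconv v Y d \<Longrightarrow> vconv v (\<lambda>n. X n * Y n) (c * d)"
proof -
  assume X: "vconv v X c" and Y: "vconv v Y d"
  obtain B N0 where B: "\<forall>n\<ge>N0. ereal B \<le> v (X n)" using vconv_bounded_below[OF X] by blast
  have left: "vconv v (\<lambda>n. X n * (Y n - d)) 0"
    unfolding vconv_def
  proof
    fix M :: real
    obtain N where N: "\<forall>n\<ge>N. ereal (M - B) \<le> v (Y n - d)" using Y unfolding vconv_def by blast
    have "ereal M \<le> v (X n * (Y n - d) - 0)" if "max N N0 \<le> n" for n
    proof -
      have "ereal (B + (M - B)) \<le> v (X n) + v (Y n - d)" using N B that by (intro ereal_add_le) auto
      then show ?thesis by (simp add: v_mult)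
    qed
    then show "\<exists>N. \<forall>n\<ge>N. ereal M \<le> v (X n * (Y n - d) - 0)" by blast
  qed
  have right: "vconv v (\<lambda>n. (X n - c) * d) 0"
    using vconv_cmult[OF vconv_diff[OF X vconv_const[of c]], of d] by (simp add: mult.commute)
  have "vconv v (\<lambda>n. (X n * (Y n - d) + (X n - c) * d) + c * d) (0 + 0 + c * d)"
    by (intro vconv_add left right vconv_const)
  then show ?thesis by (simp add: algebra_simps)
qed

lemma vconv_ge: "vconv v X c \<Longrightarrow> (\<And>n. n \<ge> N0 \<Longrightarrow> b \<le> v (X n)) \<Longrightarrow> b \<le> v c"
proof -
  assume X: "vconv v X c" and b: "\<And>n. n \<ge> N0 \<Longrightarrow> b \<le> v (X n)"
  have bM: "min b (ereal M) \<le> v c" for M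
  proof -
    obtain N where N: "\<forall>n\<ge>N. ereal M \<le> v (X n - c)" using X unfolding vconv_def by blast
    let ?n = "max N N0"
    have "min b (ereal M) \<le> b" "min b (ereal M) \<le> ereal M" by simp_all
    then have "min b (ereal M) \<le> v (X ?n)" "min b (ereal M) \<le> v (X ?n - c)"
      using b[of ?n] N by (meson max.cobounded1 max.cobounded2 order_trans)+
    then have "min b (ereal M) \<le> v (X ?n - (X ?n - c))" by (rule v_diff_ge)
    then show ?thesis by simp
  qed
  show ?thesis
  proof (cases b)
    case (real r) then show ?thesis using bM[of r] by simp
  next
    case PInf
    then have "c = 0" using bM by (intro zero_if_v_unbounded) simp
    then show ?thesis by simp
  qed simp
qed

lemma consecutive_diff_tail:
  assumes "\<And>j. ereal (b j) \<le> v (X (Suc j) - X j)" and "mono b" and "i \<le> j"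
  shows "ereal (b i) \<le> v (X j - X i)"
  using assms(3)
proof (induction j rule: dec_induct)
  case (step j)
  have "ereal (b i) \<le> ereal (b j)" using monoD[OF assms(2) step(1)] by simp
  also have "\<dots> \<le> v (X (Suc j) - X j)" by (rule assms(1))
  finally have "ereal (b i) \<le> v ((X (Suc j) - X j) + (X j - X i))" using step(3) by (intro v_add_ge)
  then show ?case by simp
qed simp

definition vclosed :: "'a set \<Rightarrow> bool" where
  "vclosed S \<longleftrightarrow> (\<forall>X c. (\<forall>n. X n \<in> S) \<longrightarrow> vconv v X c \<longrightarrow> c \<in> S)"

definition fps_val_ge :: "'a fps \<Rightarrow> real \<Rightarrow> bool" where
  "fps_val_ge f c \<longleftrightarrow> (\<forall>k. ereal c \<le> v (fps_nth f k))"

lemma fps_val_ge_mult: "fps_val_ge A a \<Longrightarrow> fps_val_ge B b \<Longrightarrow> fps_val_ge (A * B) (a + b)"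
  unfolding fps_val_ge_def fps_mult_nth by (auto intro!: v_sum_ge simp: v_mult ereal_add_le)

lemma fps_val_ge_add: "fps_val_ge A c \<Longrightarrow> fps_val_ge B c \<Longrightarrow> fps_val_ge (A + B) c"
  unfolding fps_val_ge_def by (auto intro: v_add_ge)

lemma fps_val_ge_uminus: "fps_val_ge A c \<Longrightarrow> fps_val_ge (- A) c"
  unfolding fps_val_ge_def by auto

lemma fps_val_ge_shift: "fps_val_ge A c \<Longrightarrow> fps_val_ge (fps_shift n A) c"
  unfolding fps_val_ge_def by auto

lemma fps_val_ge_mono: "fps_val_ge A c \<Longrightarrow> d \<le> c \<Longrightarrow> fps_val_ge A d"
  unfolding fps_val_ge_def by (meson ereal_less_eq(3) order_trans)

lemma fps_val_ge_unbounded_imp_zero: "(\<And>j. fps_val_ge A (real j)) \<Longrightarrow> A = 0"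
proof -
  assume a: "\<And>j. fps_val_ge A (real j)"
  have "fps_nth A k = 0" for k
  proof (rule zero_if_v_unbounded)
    fix M :: real
    have "ereal M \<le> ereal (real (nat \<lceil>M\<rceil>))" by simp linarith
    also have "\<dots> \<le> v (fps_nth A k)" using a unfolding fps_val_ge_def by blast
    finally show "ereal M \<le> v (fps_nth A k)" .
  qed
  then show ?thesis by (simp add: fps_ext)
qed

end

section \<open>Complete valued fields of characteristic zero\<close>

locale complete_valued_field = valued_field v for v :: "'a::field_char_0 \<Rightarrow> ereal" +
  assumes complete: "vcomplete v"
begin

lemma vconv_if_consecutive_diff:
  assumes "\<And>j. ereal (b j) \<le> v (X (Suc j) - X j)" and "\<And>M. \<exists>N. M \<le> b N" and "mono b"
  shows "\<exists>c. vconv v X c"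
proof -
  have "\<exists>N. \<forall>n\<ge>N. \<forall>k\<ge>N. ereal M \<le> v (X n - X k)" for M
  proof -
    obtain N where N: "M \<le> b N" using assms(2) by blast
    have "ereal M \<le> v (X n - X k)" if "N \<le> k" "k \<le> n" for n k
    proof -
      have "ereal M \<le> ereal (b k)" using N monoD[OF assms(3) \<open>N \<le> k\<close>] by simp
      also have "\<dots> \<le> v (X n - X k)" using consecutive_diff_tail[OF assms(1,3) \<open>k \<le> n\<close>] .
      finally show ?thesis .
    qed
    then show ?thesis using v_minus_commute by (metis nle_le)
  qed
  then show ?thesis using complete unfolding vcomplete_def by blast
qed

lemma Qp_inI: "(\<And>n. X n \<in> \<rat>) \<Longrightarrow> vconv v X x \<Longrightarrow> x \<in> Qp_in v"
  unfolding Qp_in_def by blast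

lemma Rats_subset_Qp: "x \<in> \<rat> \<Longrightarrow> x \<in> Qp_in v"
  using Qp_inI[of "\<lambda>n. x" x] vconv_const by blast

lemma Qp_add: "x \<in> Qp_in v \<Longrightarrow> y \<in> Qp_in v \<Longrightarrow> x + y \<in> Qp_in v"
proof -
  assume "x \<in> Qp_in v" "y \<in> Qp_in v"
  then obtain X Y where "\<And>n. X n \<in> \<rat>" "vconv v X x" "\<And>n. Y n \<in> \<rat>" "vconv v Y y"
    unfolding Qp_in_def by blast
  then show ?thesis by (intro Qp_inI[of "\<lambda>n. X n + Y n"] vconv_add) auto
qed

lemma Qp_mult: "x \<in> Qp_in v \<Longrightarrow> y \<in> Qp_in v \<Longrightarrow> x * y \<in> Qp_in v"
proof -
  assume "x \<in> Qp_in v" "y \<in> Qp_in v"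
  then obtain X Y where "\<And>n. X n \<in> \<rat>" "vconv v X x" "\<And>n. Y n \<in> \<rat>" "vconv v Y y"
    unfolding Qp_in_def by blast
  then show ?thesis by (intro Qp_inI[of "\<lambda>n. X n * Y n"] vconv_mult) auto
qed

lemma Qp_uminus: "x \<in> Qp_in v \<Longrightarrow> - x \<in> Qp_in v"
proof -
  assume "x \<in> Qp_in v"
  then obtain X where "\<And>n. X n \<in> \<rat>" "vconv v X x" unfolding Qp_in_def by blast
  then show ?thesis by (intro Qp_inI[of "\<lambda>n. - X n"] vconv_uminus) auto
qed

lemma Qp_diff: "x \<in> Qp_in v \<Longrightarrow> y \<in> Qp_in v \<Longrightarrow> x - y \<in> Qp_in v"
  using Qp_add[of x "-y"] Qp_uminus[of y] by simp

lemma vconv_inverse: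
  assumes X: "vconv v X x" and "x \<noteq> 0"
  shows "vconv v (\<lambda>n. inverse (X n)) (inverse x)"
proof -
  obtain r where r: "v x = ereal r" using v_finite[OF \<open>x \<noteq> 0\<close>] by blast
  obtain N0 where N0: "\<forall>n\<ge>N0. ereal (r + 1) \<le> v (X n - x)" using X unfolding vconv_def by blast
  have vX: "v (X n) = ereal r" if "n \<ge> N0" for n
  proof -
    have "v x < v (X n - x)" using N0 that r by (auto intro: less_le_trans[of _ "ereal (r + 1)"])
    then show ?thesis using v_add_strict[of x "X n - x"] r by simp
  qed
  show ?thesis unfolding vconv_def
  proof
    fix M :: real
    obtain N where N: "\<forall>n\<ge>N. ereal (M + 2 * r) \<le> v (X n - x)" using X unfolding vconv_def by blast
    have "ereal M \<le> v (inverse (X n) - inverse x)" if "n \<ge> max N N0" for n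
    proof -
      have Xn: "X n \<noteq> 0" using vX[of n] that by auto
      have "inverse (X n) - inverse x = (x - X n) / (X n * x)" using Xn \<open>x \<noteq> 0\<close>
        by (simp add: field_simps)
      then have "v (inverse (X n) - inverse x) = v (X n - x) - ereal (2 * r)"
        using Xn \<open>x \<noteq> 0\<close> vX[of n] r that by (simp add: v_divide v_mult v_minus_commute[of x])
      then show ?thesis using N that by (simp add: ereal_le_minus)
    qed
    then show "\<exists>N. \<forall>n\<ge>N. ereal M \<le> v (inverse (X n) - inverse x)" by blast
  qed
qed

lemma Qp_inverse: "x \<in> Qp_in v \<Longrightarrow> inverse x \<in> Qp_in v"
proof (cases "x = 0")
  case True then show "inverse x \<in> Qp_in v" using Rats_subset_Qp[of 0] by simp
next
  case False
  assume "x \<in> Qp_in v"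
  then obtain X where X: "\<And>n. X n \<in> \<rat>" "vconv v X x" unfolding Qp_in_def by blast
  then show ?thesis using vconv_inverse[OF X(2) False] by (intro Qp_inI) auto
qed

lemma Qp_closed: "vclosed (Qp_in v)"
  unfolding vclosed_def
proof (intro allI impI)
  fix X c assume X: "\<forall>n. X n \<in> Qp_in v" "vconv v X c"
  \<comment> \<open>a diagonal sequence of rational approximations\<close>
  have "\<exists>q. q \<in> \<rat> \<and> ereal (real n) \<le> v (q - X n)" for n
  proof -
    obtain Z where Z: "\<And>k. Z k \<in> \<rat>" "vconv v Z (X n)" using X(1) unfolding Qp_in_def by blast
    obtain N where "\<forall>k\<ge>N. ereal (real n) \<le> v (Z k - X n)" using Z(2) unfolding vconv_def by blast
    then show ?thesis using Z(1) by blast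
  qed
  then obtain Q where Q: "\<And>n. Q n \<in> \<rat>" "\<And>n. ereal (real n) \<le> v (Q n - X n)" by metis
  have "vconv v Q c" unfolding vconv_def
  proof
    fix M :: real
    obtain N where N: "\<forall>n\<ge>N. ereal M \<le> v (X n - c)" using X(2) unfolding vconv_def by blast
    have "ereal M \<le> v (Q n - c)" if "n \<ge> max N (nat \<lceil>M\<rceil>)" for n
    proof -
      have "ereal M \<le> ereal (real n)" using that by simp
      then have "ereal M \<le> v (Q n - X n)" using Q(2)[of n] by order
      moreover have "ereal M \<le> v (X n - c)" using N that by simp
      ultimately have "ereal M \<le> v ((Q n - X n) + (X n - c))" by (rule v_add_ge)
      then show ?thesis by simp
    qed
    then show "\<exists>N. \<forall>n\<ge>N. ereal M \<le> v (Q n - c)" by blast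
  qed
  then show "c \<in> Qp_in v" using Q(1) unfolding Qp_in_def by blast
qed

definition Qp_span :: "'a set \<Rightarrow> 'a set" where
  "Qp_span B = {x. \<exists>c. (\<forall>b\<in>B. c b \<in> Qp_in v) \<and> x = (\<Sum>b\<in>B. c b * b)}"

lemma Qp_span_empty: "Qp_span {} = {0}"
  unfolding Qp_span_def by auto

lemma Qp_span_insert:
  assumes "finite B" and "b \<notin> B"
  shows "Qp_span (insert b B) = {y + t * b | y t. y \<in> Qp_span B \<and> t \<in> Qp_in v}"
proof (rule subset_antisym; rule subsetI)
  fix x
  assume "x \<in> Qp_span (insert b B)"
  then obtain c where c: "\<forall>a\<in>insert b B. c a \<in> Qp_in v" "x = (\<Sum>a\<in>insert b B. c a * a)"
    unfolding Qp_span_def by blast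
  have "x = (\<Sum>a\<in>B. c a * a) + c b * b" using c(2) assms by simp
  moreover have "(\<Sum>a\<in>B. c a * a) \<in> Qp_span B"
    using c(1) unfolding Qp_span_def by (intro CollectI exI[of _ c]) auto
  ultimately show "x \<in> {y + t * b | y t. y \<in> Qp_span B \<and> t \<in> Qp_in v}" using c(1) by blast
next
  fix x
  assume "x \<in> {y + t * b | y t. y \<in> Qp_span B \<and> t \<in> Qp_in v}"
  then obtain t d where t: "t \<in> Qp_in v" and d: "\<forall>a\<in>B. d a \<in> Qp_in v"
    and x: "x = (\<Sum>a\<in>B. d a * a) + t * b" unfolding Qp_span_def by blast
  have "(\<Sum>a\<in>B. (d(b := t)) a * a) = (\<Sum>a\<in>B. d a * a)" using assms(2) by (intro sum.cong) auto
  then have "x = (\<Sum>a\<in>insert b B. (d(b := t)) a * a)" using x assms by (simp add: add.commute)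
  moreover have "\<forall>a\<in>insert b B. (d(b := t)) a \<in> Qp_in v" using d t by auto
  ultimately show "x \<in> Qp_span (insert b B)" unfolding Qp_span_def by (intro CollectI exI[of _ "d(b := t)"]) auto
qed

lemma Qp_span_add: "x \<in> Qp_span B \<Longrightarrow> y \<in> Qp_span B \<Longrightarrow> x + y \<in> Qp_span B"
proof -
  assume "x \<in> Qp_span B" "y \<in> Qp_span B"
  then obtain c d where c: "\<forall>b\<in>B. c b \<in> Qp_in v" "x = (\<Sum>b\<in>B. c b * b)"
    and d: "\<forall>b\<in>B. d b \<in> Qp_in v" "y = (\<Sum>b\<in>B. d b * b)" unfolding Qp_span_def by blast
  have "x + y = (\<Sum>b\<in>B. (c b + d b) * b)" using c d by (simp add: sum.distrib algebra_simps)
  moreover have "\<forall>b\<in>B. c b + d b \<in> Qp_in v" using c d Qp_add by blast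
  ultimately show ?thesis unfolding Qp_span_def by (intro CollectI exI[of _ "\<lambda>b. c b + d b"]) auto
qed

lemma Qp_span_smult: "x \<in> Qp_span B \<Longrightarrow> t \<in> Qp_in v \<Longrightarrow> t * x \<in> Qp_span B"
proof -
  assume "x \<in> Qp_span B" "t \<in> Qp_in v"
  then obtain c where c: "\<forall>b\<in>B. c b \<in> Qp_in v" "x = (\<Sum>b\<in>B. c b * b)"
    unfolding Qp_span_def by blast
  have "t * x = (\<Sum>b\<in>B. (t * c b) * b)" using c by (simp add: sum_distrib_left algebra_simps)
  moreover have "\<forall>b\<in>B. t * c b \<in> Qp_in v" using c \<open>t \<in> Qp_in v\<close> Qp_mult by blast
  ultimately show ?thesis unfolding Qp_span_def by (intro CollectI exI[of _ "\<lambda>b. t * c b"]) auto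
qed

lemma Qp_span_diff: "x \<in> Qp_span B \<Longrightarrow> y \<in> Qp_span B \<Longrightarrow> x - y \<in> Qp_span B"
  using Qp_span_add[of x B "(-1) * y"] Qp_span_smult[of y B "-1"] Rats_subset_Qp[of "-1"] by simp

lemma Qp_span_insert_redundant:
  assumes "finite B" "b \<notin> B" "b \<in> Qp_span B"
  shows "Qp_span (insert b B) = Qp_span B"
proof
  show "Qp_span (insert b B) \<subseteq> Qp_span B"
  proof
    fix x assume "x \<in> Qp_span (insert b B)"
    then obtain y t where "x = y + t * b" "y \<in> Qp_span B" "t \<in> Qp_in v"
      by (subst (asm) Qp_span_insert[OF assms(1,2)]) blast
    then show "x \<in> Qp_span B" using assms(3) Qp_span_add Qp_span_smult by simp
  qed
  show "Qp_span B \<subseteq> Qp_span (insert b B)"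
  proof
    fix x assume "x \<in> Qp_span B"
    then have "x + 0 * b \<in> Qp_span (insert b B)"
      using Rats_subset_Qp[OF Rats_0] by (subst Qp_span_insert[OF assms(1,2)]) blast
    then show "x \<in> Qp_span (insert b B)" by simp
  qed
qed

text \<open>If \<open>Y n + T n * b\<close> converges with \<open>Y n\<close> in a closed subspace not containing \<open>b\<close>, then
  the coordinates \<open>T n\<close> form a Cauchy sequence: otherwise suitable quotients of differences
  would approximate \<open>b\<close> from inside the subspace.\<close>
lemma coordinate_cauchy:
  assumes closed: "vclosed (Qp_span B)" and b: "b \<notin> Qp_span B"
    and Y: "\<And>n. Y n \<in> Qp_span B" and T: "\<And>n. T n \<in> Qp_in v"
    and X: "vconv v (\<lambda>n. Y n + T n * b) c"
  shows "\<forall>M::real. \<exists>N. \<forall>n\<ge>N. \<forall>k\<ge>N. ereal M \<le> v (T n - T k)"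
proof (rule ccontr)
  assume "\<not> ?thesis"
  then obtain M0 :: real where "\<forall>N. \<exists>n\<ge>N. \<exists>k\<ge>N. \<not> ereal M0 \<le> v (T n - T k)" by blast
  then obtain nn kk where nk: "\<And>N. nn N \<ge> N" "\<And>N. kk N \<ge> N"
    "\<And>N. \<not> ereal M0 \<le> v (T (nn N) - T (kk N))" by metis
  define \<delta> where "\<delta> N = T (nn N) - T (kk N)" for N
  define W where "W N = - (Y (nn N) - Y (kk N)) / \<delta> N" for N
  have \<delta>: "\<delta> N \<noteq> 0" "v (\<delta> N) < ereal M0" for N using nk(3)[of N] by (auto simp: \<delta>_def)
  have "W N \<in> Qp_span B" for N
  proof -
    have "inverse (\<delta> N) \<in> Qp_in v" unfolding \<delta>_def using T Qp_diff Qp_inverse by blast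
    then have "(- inverse (\<delta> N)) * (Y (nn N) - Y (kk N)) \<in> Qp_span B"
      using Y Qp_span_diff Qp_span_smult Qp_uminus by blast
    then show ?thesis by (simp add: W_def divide_inverse algebra_simps)
  qed
  moreover have "vconv v W b" unfolding vconv_def
  proof
    fix M :: real
    obtain N where N: "\<forall>n\<ge>N. ereal (M + M0) \<le> v (Y n + T n * b - c)"
      using X unfolding vconv_def by blast
    have "ereal M \<le> v (W n - b)" if "n \<ge> N" for n
    proof -
      let ?X = "\<lambda>n. Y n + T n * b"
      have "W n - b = (?X (kk n) - ?X (nn n)) / \<delta> n"
        using \<delta>(1)[of n] by (simp add: W_def \<delta>_def field_simps)
      then have eq: "v (W n - b) = v (?X (kk n) - ?X (nn n)) - v (\<delta> n)"
        using \<delta>(1)[of n] by (simp add: v_divide)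
      have "ereal (M + M0) \<le> v ((?X (kk n) - c) - (?X (nn n) - c))"
        by (rule v_diff_ge) (use N nk(1,2)[of n] that in auto)
      then have "ereal (M + M0) \<le> v (?X (kk n) - ?X (nn n))" by (simp add: algebra_simps)
      then show ?thesis unfolding eq using \<delta>(2)[of n] v_finite[OF \<delta>(1)[of n]]
        by (cases "v (?X (kk n) - ?X (nn n))") auto
    qed
    then show "\<exists>N. \<forall>n\<ge>N. ereal M \<le> v (W n - b)" by blast
  qed
  ultimately have "b \<in> Qp_span B" using closed unfolding vclosed_def by blast
  then show False using b by blast
qed

lemma Qp_span_insert_closed:
  assumes "finite B" "b \<notin> B" and closed: "vclosed (Qp_span B)" and b: "b \<notin> Qp_span B"
  shows "vclosed (Qp_span (insert b B))"
  unfolding vclosed_def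
proof (intro allI impI)
  fix X c assume X: "\<forall>n. X n \<in> Qp_span (insert b B)" "vconv v X c"
  have "\<forall>n. \<exists>y t. X n = y + t * b \<and> y \<in> Qp_span B \<and> t \<in> Qp_in v"
    using X(1) by (auto simp: Qp_span_insert[OF assms(1,2)])
  then obtain Y T where XYT: "\<And>n. X n = Y n + T n * b" and Y: "\<And>n. Y n \<in> Qp_span B"
    and T: "\<And>n. T n \<in> Qp_in v"
    by metis
  have "X = (\<lambda>n. Y n + T n * b)" using XYT by blast
  then have "vconv v (\<lambda>n. Y n + T n * b) c" using X(2) by simp
  then have "\<forall>M::real. \<exists>N. \<forall>n\<ge>N. \<forall>k\<ge>N. ereal M \<le> v (T n - T k)"
    by (rule coordinate_cauchy[OF closed b Y T])
  then obtain t where t: "vconv v T t" using complete unfolding vcomplete_def by blast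
  have "t \<in> Qp_in v" using Qp_closed t T unfolding vclosed_def by blast
  have "vconv v (\<lambda>n. X n - T n * b) (c - t * b)"
    using vconv_diff[OF X(2) vconv_cmult[OF t, of b]] by (simp add: mult.commute)
  then have "c - t * b \<in> Qp_span B" using closed Y XYT unfolding vclosed_def by auto
  then have "(c - t * b) + t * b \<in> Qp_span (insert b B)"
    using \<open>t \<in> Qp_in v\<close> by (subst Qp_span_insert[OF assms(1,2)]) blast
  then show "c \<in> Qp_span (insert b B)" by simp
qed

lemma Qp_span_closed: "finite B \<Longrightarrow> vclosed (Qp_span B)"
proof (induction B rule: finite_induct)
  case empty
  show ?case unfolding vclosed_def Qp_span_empty
  proof (intro allI impI)
    fix X c assume "\<forall>n. X n \<in> {0::'a}" "vconv v X c"
    then have "vconv v (\<lambda>n. 0) c" by (metis singletonD ext)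
    then show "c \<in> {0}" using vconv_unique vconv_const by blast
  qed
next
  case (insert b B)
  then show ?case by (cases "b \<in> Qp_span B") (simp_all add: Qp_span_insert_redundant Qp_span_insert_closed)
qed

end

section \<open>Finite extensions of \<open>\<rat>\<^sub>p\<close> and their rings of integers\<close>

locale local_field = complete_valued_field v for v :: "'a::field_char_0 \<Rightarrow> ereal" +
  fixes K :: "'a set"
  assumes finite_ext: "finite_ext_Qp v K"
begin

lemma subfield_K: "subfield_of K"
  using finite_ext unfolding finite_ext_Qp_def by blast

lemma K_0: "0 \<in> K" and K_1: "1 \<in> K"
  and K_add: "x \<in> K \<Longrightarrow> y \<in> K \<Longrightarrow> x + y \<in> K"
  and K_mult: "x \<in> K \<Longrightarrow> y \<in> K \<Longrightarrow> x * y \<in> K"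
  and K_uminus: "x \<in> K \<Longrightarrow> - x \<in> K"
  and K_inverse: "x \<in> K \<Longrightarrow> inverse x \<in> K"
  using subfield_K unfolding subfield_of_def by blast+

lemma K_diff: "x \<in> K \<Longrightarrow> y \<in> K \<Longrightarrow> x - y \<in> K"
  using K_add[of x "-y"] K_uminus[of y] by simp

lemma K_divide: "x \<in> K \<Longrightarrow> y \<in> K \<Longrightarrow> x / y \<in> K"
  using K_mult K_inverse by (simp add: divide_inverse)

lemma K_sum: "(\<And>i. i \<in> A \<Longrightarrow> f i \<in> K) \<Longrightarrow> sum f A \<in> K"
  by (induction A rule: infinite_finite_induct) (auto simp: K_0 K_add)

lemma K_of_nat: "of_nat n \<in> K"
  by (induction n) (auto simp: K_0 K_1 K_add)

lemma K_power: "x \<in> K \<Longrightarrow> x ^ n \<in> K"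
  by (induction n) (auto simp: K_1 K_mult)

lemma K_closed: "vclosed K"
proof -
  obtain B where B: "finite B" "B \<subseteq> K"
    "\<forall>x\<in>K. \<exists>c. (\<forall>b\<in>B. c b \<in> Qp_in v) \<and> x = (\<Sum>b\<in>B. c b * b)"
    using finite_ext unfolding finite_ext_Qp_def by blast
  have "Qp_in v \<subseteq> K" using finite_ext unfolding finite_ext_Qp_def by blast
  then have "K = Qp_span B"
    using B unfolding Qp_span_def by (auto intro!: K_sum K_mult)
  then show ?thesis using Qp_span_closed[OF B(1)] by simp
qed

abbreviation \<O> :: "'a set" where "\<O> \<equiv> int_ring v K"

lemma int_ring_iff: "x \<in> \<O> \<longleftrightarrow> x \<in> K \<and> 0 \<le> v x"
  unfolding int_ring_def by simp

lemma int_ring_closed: "vclosed \<O>"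
  unfolding vclosed_def
proof (intro allI impI)
  fix X c assume X: "\<forall>n. X n \<in> \<O>" "vconv v X c"
  have "c \<in> K" using K_closed X unfolding vclosed_def int_ring_iff by blast
  moreover have "0 \<le> v c" using vconv_ge[OF X(2), of 0] X(1) by (auto simp: int_ring_iff)
  ultimately show "c \<in> \<O>" by (simp add: int_ring_iff)
qed

lemma int_ring_0: "0 \<in> \<O>" and int_ring_1: "1 \<in> \<O>"
  and int_ring_add: "x \<in> \<O> \<Longrightarrow> y \<in> \<O> \<Longrightarrow> x + y \<in> \<O>"
  and int_ring_uminus: "x \<in> \<O> \<Longrightarrow> - x \<in> \<O>"
  and int_ring_diff: "x \<in> \<O> \<Longrightarrow> y \<in> \<O> \<Longrightarrow> x - y \<in> \<O>"
  and int_ring_mult: "x \<in> \<O> \<Longrightarrow> y \<in> \<O> \<Longrightarrow> x * y \<in> \<O>"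
  and int_ring_of_nat: "of_nat n \<in> \<O>"
  by (simp_all add: int_ring_iff K_0 K_1 K_add K_uminus K_diff K_mult K_of_nat
      v_add_ge v_diff_ge v_mult v_of_nat_ge)

lemma int_ring_sum: "(\<And>i. i \<in> A \<Longrightarrow> f i \<in> \<O>) \<Longrightarrow> sum f A \<in> \<O>"
  by (induction A rule: infinite_finite_induct) (auto simp: int_ring_0 int_ring_add)

lemma int_ring_inverse: "x \<in> K \<Longrightarrow> v x = 0 \<Longrightarrow> inverse x \<in> \<O>"
  by (cases "x = 0") (auto simp: int_ring_iff K_inverse v_inverse)

lemma in_RT_nth: "in_RT \<O> f \<Longrightarrow> fps_nth f k \<in> \<O>"
  unfolding in_RT_def by blast

lemma in_RT_val_ge: "in_RT \<O> f \<Longrightarrow> fps_val_ge f 0"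
  unfolding in_RT_def fps_val_ge_def by (auto simp: int_ring_iff zero_ereal_def)

lemma in_RT_one: "in_RT \<O> 1"
  unfolding in_RT_def by (auto simp: int_ring_0 int_ring_1 fps_one_nth)

lemma in_RT_mult: "in_RT \<O> A \<Longrightarrow> in_RT \<O> B \<Longrightarrow> in_RT \<O> (A * B)"
  unfolding in_RT_def fps_mult_nth by (auto intro!: int_ring_sum int_ring_mult)

lemma in_RT_diff: "in_RT \<O> A \<Longrightarrow> in_RT \<O> B \<Longrightarrow> in_RT \<O> (A - B)"
  unfolding in_RT_def by (auto intro!: int_ring_diff)

lemma in_RT_shift: "in_RT \<O> A \<Longrightarrow> in_RT \<O> (fps_shift n A)"
  unfolding in_RT_def by auto

lemma in_RT_inverse:
  assumes f: "in_RT \<O> f" and f0: "v (fps_nth f 0) = 0"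
  shows "in_RT \<O> (inverse f)"
proof -
  have nz: "fps_nth f 0 \<noteq> 0" using f0 by auto
  have one: "inverse f * f = 1" using inverse_mult_eq_1[OF nz] .
  have inv0: "inverse (fps_nth f 0) \<in> \<O>" using int_ring_inverse in_RT_nth[OF f] f0 by (simp add: int_ring_iff)
  have "fps_nth (inverse f) n \<in> \<O>" for n
  proof (induction n rule: less_induct)
    case (less n)
    show ?case
    proof (cases n)
      case 0
      then show ?thesis using inv0 nz by (simp add: fps_inverse_def)
    next
      case (Suc m)
      \<comment> \<open>solve the \<open>n\<close>-th coefficient of \<open>inverse f * f = 1\<close> for \<open>fps_nth (inverse f) n\<close>\<close>
      have "(\<Sum>i=0..n. fps_nth (inverse f) i * fps_nth f (n - i)) = 0"
        using arg_cong[OF one, of "\<lambda>h. fps_nth h n"] Suc by (simp add: fps_mult_nth)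
      moreover have "(\<Sum>i=0..n. fps_nth (inverse f) i * fps_nth f (n - i))
          = (\<Sum>i<n. fps_nth (inverse f) i * fps_nth f (n - i)) + fps_nth (inverse f) n * fps_nth f 0"
        by (simp add: atLeast0AtMost lessThan_Suc_atMost[symmetric])
      ultimately have "fps_nth (inverse f) n
          = - (\<Sum>i<n. fps_nth (inverse f) i * fps_nth f (n - i)) * inverse (fps_nth f 0)"
        using nz by (simp add: field_simps add_eq_0_iff)
      moreover have "(\<Sum>i<n. fps_nth (inverse f) i * fps_nth f (n - i)) \<in> \<O>"
        using less f unfolding in_RT_def by (auto intro!: int_ring_sum int_ring_mult)
      ultimately show ?thesis using inv0 by (simp add: int_ring_mult int_ring_uminus)
    qed
  qed
  then show ?thesis unfolding in_RT_def by blast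
qed

lemma fps_limit_exists:
  assumes A: "\<And>j. in_RT \<O> (A j)"
    and diff: "\<And>j. fps_val_ge (A (Suc j) - A j) (b j)"
    and unbounded: "\<And>M. \<exists>N. M \<le> b N" and mono: "mono b"
  obtains a where "in_RT \<O> a" and "\<And>j. fps_val_ge (a - A j) (b j)"
proof -
  have cons: "ereal (b j) \<le> v (fps_nth (A (Suc j)) k - fps_nth (A j) k)" for j k
    using diff[of j] unfolding fps_val_ge_def by simp
  have "\<exists>c. vconv v (\<lambda>j. fps_nth (A j) k) c" for k
    by (rule vconv_if_consecutive_diff[OF cons unbounded mono])
  then obtain a where conv: "\<And>k. vconv v (\<lambda>j. fps_nth (A j) k) (a k)" by metis
  have "in_RT \<O> (Abs_fps a)"
    using int_ring_closed conv A unfolding vclosed_def in_RT_def by (metis fps_nth_Abs_fps)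
  moreover have "fps_val_ge (Abs_fps a - A j) (b j)" for j
    unfolding fps_val_ge_def
  proof
    fix k
    have "vconv v (\<lambda>i. fps_nth (A i) k - fps_nth (A j) k) (a k - fps_nth (A j) k)"
      by (intro vconv_diff conv vconv_const)
    then have "ereal (b j) \<le> v (a k - fps_nth (A j) k)"
      by (rule vconv_ge[of _ _ j]) (rule consecutive_diff_tail[OF cons mono])
    then show "ereal (b j) \<le> v (fps_nth (Abs_fps a - A j) k)" by simp
  qed
  ultimately show ?thesis by (rule that)
qed

end

section \<open>Weierstrass preparation\<close>

lemma fps_shift_eq_one_imp_monic_poly:
  fixes G :: "'a::comm_ring_1 fps"
  assumes "fps_shift lam G = 1"
  obtains g where "fps_of_poly g = G" "degree g = lam" "lead_coeff g = 1"
    "\<And>i. i < lam \<Longrightarrow> coeff g i = fps_nth G i"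
proof -
  have shifted: "fps_nth G (k + lam) = (if k = 0 then 1 else 0)" for k
    using arg_cong[OF assms, of "\<lambda>h. fps_nth h k"] by simp
  have G: "fps_nth G lam = 1" "\<And>k. lam < k \<Longrightarrow> fps_nth G k = 0"
  proof -
    show "fps_nth G lam = 1" using shifted[of 0] by simp
    fix k assume "lam < k"
    then show "fps_nth G k = 0" using shifted[of "k - lam"] by simp
  qed
  define g where "g = (\<Sum>i\<le>lam. monom (fps_nth G i) i)"
  have cg: "coeff g i = (if i \<le> lam then fps_nth G i else 0)" for i
    unfolding g_def by (simp add: coeff_sum coeff_monom)
  have "degree g = lam"
    by (rule antisym; (rule degree_le le_degree)) (auto simp: cg G)
  moreover have "fps_of_poly g = G"
    by (rule fps_ext) (auto simp: fps_of_poly_nth cg G(2) not_le)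
  ultimately show ?thesis using that G(1) by (simp add: cg)
qed

locale uniformized_local_field = local_field v K for v :: "'a::field_char_0 \<Rightarrow> ereal" and K +
  fixes \<pi> :: 'a and e :: nat
  assumes uniformizer: "uniformizer v K \<pi>" and ram: "ram_index v \<pi> e"
begin

lemma e_pos: "e > 0" and v_pi: "v \<pi> = ereal (1 / real e)"
  using ram unfolding ram_index_def by blast+

lemma pi_K: "\<pi> \<in> K"
  using uniformizer unfolding uniformizer_def by blast

lemma pi_nonzero: "\<pi> \<noteq> 0"
  using v_pi by auto

lemma v_pi_power: "v (\<pi> ^ j) = ereal (real j / real e)"
  using v_power[OF v_pi, of j] by simp

lemma v_divide_pi_power: "v (x / \<pi> ^ j) = v x - ereal (real j / real e)"
  using v_divide[of "\<pi> ^ j" x] pi_nonzero v_pi_power by simp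

lemma int_ring_val_less_pi: "x \<in> \<O> \<Longrightarrow> v x < ereal (1 / real e) \<Longrightarrow> v x = 0"
proof -
  assume x: "x \<in> \<O>" "v x < ereal (1 / real e)"
  have "\<not> 0 < v x"
  proof
    assume "0 < v x"
    then have "v \<pi> \<le> v x" using uniformizer x(1) unfolding uniformizer_def int_ring_iff by blast
    then show False using x(2) v_pi by simp
  qed
  then show ?thesis using x(1) by (simp add: int_ring_iff)
qed

lemma distinguished_times_unit_coeffs:
  assumes g: "degree g = lam" "lead_coeff g = 1" "\<forall>i<lam. \<exists>r\<in>\<O>. coeff g i = \<pi> * r"
    and u: "in_RT \<O> u" "v (fps_nth u 0) = 0"
  shows "fps_val_ge (fps_of_poly g * u) 0"
    and "v (fps_nth (fps_of_poly g * u) lam) = 0"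
    and "\<forall>k<lam. ereal (1 / real e) \<le> v (fps_nth (fps_of_poly g * u) k)"
proof -
  let ?h = "fps_of_poly g * u"
  have uR: "0 \<le> v (fps_nth u k)" for k using in_RT_nth[OF u(1)] by (simp add: int_ring_iff)
  have low: "ereal (1 / real e) \<le> v (coeff g i)" if i: "i < lam" for i
  proof -
    obtain r where r: "r \<in> \<O>" "coeff g i = \<pi> * r" using g(3) i by blast
    have "ereal (1 / real e + 0) \<le> v \<pi> + v r"
      using r v_pi by (intro ereal_add_le) (auto simp: int_ring_iff zero_ereal_def)
    then show ?thesis using r by (simp add: v_mult)
  qed
  have g0: "0 \<le> v (coeff g i)" for i
  proof (cases "i < lam")
    case True then show ?thesis using order_trans[OF _ low[OF True], of 0] by simp
  next
    case False then show ?thesis using g(1,2) by (cases "i = lam") (auto simp: coeff_eq_0)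
  qed
  have hnth: "fps_nth ?h k = (\<Sum>i=0..k. coeff g i * fps_nth u (k - i))" for k
    by (simp add: fps_mult_nth fps_of_poly_nth)
  have low_terms: "ereal (1 / real e) \<le> v (coeff g i * fps_nth u (k - i))" if "i < lam" for i k
    using ereal_add_le[OF low[OF that] uR[unfolded zero_ereal_def]] by (simp add: v_mult)
  show "fps_val_ge ?h 0"
    unfolding fps_val_ge_def hnth zero_ereal_def[symmetric] using g0 uR
    by (auto intro!: v_sum_ge simp: v_mult)
  show "\<forall>k<lam. ereal (1 / real e) \<le> v (fps_nth ?h k)"
    unfolding hnth by (auto intro!: v_sum_ge low_terms)
  have "fps_nth ?h lam = fps_nth u 0 + (\<Sum>i<lam. coeff g i * fps_nth u (lam - i))"
    using g(1,2) unfolding hnth by (simp add: atLeast0AtMost lessThan_Suc_atMost[symmetric])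
  moreover have "ereal (1 / real e) \<le> v (\<Sum>i<lam. coeff g i * fps_nth u (lam - i))"
    by (auto intro!: v_sum_ge low_terms)
  then have "v (fps_nth u 0) < v (\<Sum>i<lam. coeff g i * fps_nth u (lam - i))"
    using u(2) e_pos less_le_trans[of 0 "ereal (1 / real e)"] by simp
  ultimately show "v (fps_nth ?h lam) = 0" using v_add_strict u(2) by simp
qed

lemma weierstrass_fact_coeffs:
  assumes "weierstrass_fact \<O> \<pi> f mu lam"
  shows "fps_val_ge f (real mu / real e)"
    and "v (fps_nth f lam) = ereal (real mu / real e)"
    and "\<forall>k<lam. ereal ((real mu + 1) / real e) \<le> v (fps_nth f k)"
proof -
  obtain g u w where u: "in_RT \<O> u" "in_RT \<O> w" "u * w = 1"
    and g: "degree g = lam" "lead_coeff g = 1" "\<forall>i<lam. \<exists>r\<in>\<O>. coeff g i = \<pi> * r"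
    and f: "f = fps_const (\<pi> ^ mu) * fps_of_poly g * u"
    using assms unfolding weierstrass_fact_def by blast
  have "v (fps_nth u 0) = 0"
    using v_unit_eq_zero[of "fps_nth u 0" "fps_nth w 0"] arg_cong[OF u(3), of "\<lambda>h. fps_nth h 0"]
      in_RT_nth[OF u(1)] in_RT_nth[OF u(2)] by (simp add: int_ring_iff)
  note h = distinguished_times_unit_coeffs[OF g u(1) this]
  let ?h = "fps_of_poly g * u"
  have vf: "v (fps_nth f k) = ereal (real mu / real e) + v (fps_nth ?h k)" for k
    unfolding f mult.assoc fps_mult_left_const_nth by (simp add: v_mult v_pi_power)
  show "fps_val_ge f (real mu / real e)"
    using h(1) ereal_add_le[of "real mu / real e" _ 0] unfolding fps_val_ge_def vf by simp
  show "v (fps_nth f lam) = ereal (real mu / real e)"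
    using h(2) vf by simp
  show "\<forall>k<lam. ereal ((real mu + 1) / real e) \<le> v (fps_nth f k)"
    using h(3) ereal_add_le[of "real mu / real e" _ "1 / real e"] unfolding vf
    by (simp add: add_divide_distrib)
qed

lemma weierstrass_fact_unique:
  assumes "weierstrass_fact \<O> \<pi> f mu lam" and "weierstrass_fact \<O> \<pi> f mu' lam'"
  shows "mu = mu'" and "lam = lam'"
proof -
  have e: "real e > 0" using e_pos by simp
  have "real mu' / real e \<le> real mu / real e"
    if "weierstrass_fact \<O> \<pi> f mu lam" "weierstrass_fact \<O> \<pi> f mu' lam'" for mu lam mu' lam'
    using weierstrass_fact_coeffs(1)[OF that(2)] weierstrass_fact_coeffs(2)[OF that(1)]
    unfolding fps_val_ge_def by (metis ereal_less_eq(3))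
  then have "real mu' \<le> real mu" "real mu \<le> real mu'"
    using assms e by (simp_all add: divide_le_cancel)
  then show mu: "mu = mu'" by simp
  have "\<not> lam < lam'"
  proof
    assume "lam < lam'"
    then have "ereal ((real mu + 1) / real e) \<le> ereal (real mu / real e)"
      using weierstrass_fact_coeffs(3)[OF assms(2)] weierstrass_fact_coeffs(2)[OF assms(1)] mu by metis
    then show False using e by (simp add: divide_le_cancel)
  qed
  moreover have "\<not> lam' < lam"
  proof
    assume "lam' < lam"
    then have "ereal ((real mu + 1) / real e) \<le> ereal (real mu / real e)"
      using weierstrass_fact_coeffs(3)[OF assms(1)] weierstrass_fact_coeffs(2)[OF assms(2)] mu by metis
    then show False using e by (simp add: divide_le_cancel)
  qed
  ultimately show "lam = lam'" by simp
qed

lemma weier_invariants_eq: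
  assumes "weierstrass_fact \<O> \<pi> f mu lam" and "f \<noteq> 0"
  shows "weier_mu \<O> \<pi> f = enat mu" and "weier_lambda \<O> \<pi> f = lam"
proof -
  have "(THE mu. \<exists>lam. weierstrass_fact \<O> \<pi> f mu lam) = mu"
    using assms(1) weierstrass_fact_unique by (intro the_equality) blast+
  then show "weier_mu \<O> \<pi> f = enat mu" using assms(2) unfolding weier_mu_def by simp
  have "(THE lam. \<exists>mu. weierstrass_fact \<O> \<pi> f mu lam) = lam"
    using assms(1) weierstrass_fact_unique by (intro the_equality) blast+
  then show "weier_lambda \<O> \<pi> f = lam" using assms(2) unfolding weier_lambda_def by simp
qed

text \<open>For \<open>v z = s\<close> with \<open>\<lambda> s < 1/e\<close>, the term of degree \<open>\<lambda>\<close> dominates every other term.\<close>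
lemma v_weierstrass_truncation:
  assumes wf: "weierstrass_fact \<O> \<pi> f mu lam" and vz: "v z = ereal s" and s: "0 < s"
    and small: "real lam * s < 1 / real e" and L: "lam < L"
  shows "v (\<Sum>k<L. fps_nth f k * z ^ k) = ereal (real mu / real e + real lam * s)"
proof -
  define t where "t = real mu / real e + real lam * s"
  define d where "d = min (1 / real e - real lam * s) s"
  have d: "0 < d" unfolding d_def using small s by simp
  note coeffs = weierstrass_fact_coeffs[OF wf]
  have vzk: "v (z ^ k) = ereal (real k * s)" for k using v_power[OF vz] .
  have lead: "v (fps_nth f lam * z ^ lam) = ereal t"
    unfolding t_def using coeffs(2) vzk by (simp add: v_mult)
  have others: "ereal (t + d) \<le> v (\<Sum>k\<in>{..<L} - {lam}. fps_nth f k * z ^ k)"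
  proof (rule v_sum_ge)
    fix k assume k: "k \<in> {..<L} - {lam}"
    have "ereal (t + d) \<le> v (fps_nth f k) + v (z ^ k)"
    proof (cases "k < lam")
      case True
      have "ereal ((real mu + 1) / real e + real k * s) \<le> v (fps_nth f k) + v (z ^ k)"
        using coeffs(3) True vzk by (intro ereal_add_le) auto
      moreover have "d \<le> 1 / real e - real lam * s" "0 \<le> real k * s" using s by (simp_all add: d_def)
      then have "t + d \<le> (real mu + 1) / real e + real k * s"
        unfolding t_def by (simp add: add_divide_distrib)
      ultimately show ?thesis by (meson ereal_less_eq(3) order_trans)
    next
      case False
      then have "lam + 1 \<le> k" using k by auto
      then have "real (lam + 1) * s \<le> real k * s" using s by (intro mult_right_mono) auto
      then have "t + d \<le> real mu / real e + real k * s" unfolding t_def d_def by (simp add: algebra_simps)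
      moreover have "ereal (real mu / real e + real k * s) \<le> v (fps_nth f k) + v (z ^ k)"
        using coeffs(1) vzk unfolding fps_val_ge_def by (intro ereal_add_le) auto
      ultimately show ?thesis by (meson ereal_less_eq(3) order_trans)
    qed
    then show "ereal (t + d) \<le> v (fps_nth f k * z ^ k)" by (simp add: v_mult)
  qed
  have "v (fps_nth f lam * z ^ lam) < v (\<Sum>k\<in>{..<L} - {lam}. fps_nth f k * z ^ k)"
    unfolding lead using d others by (auto intro: less_le_trans[of _ "ereal (t + d)"])
  then show ?thesis using L lead unfolding t_def by (simp add: sum.remove v_add_strict)
qed

lemma fps_content_factor:
  assumes f: "in_RT \<O> f" and nz: "f \<noteq> 0"
  obtains mu F where "in_RT \<O> F" "f = fps_const (\<pi> ^ mu) * F" "\<exists>k. v (fps_nth F k) = 0"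
proof -
  have e: "real e > 0" using e_pos by simp
  define S where "S = {j::nat. \<exists>k. v (fps_nth f k) < ereal ((real j + 1) / real e)}"
  obtain k0 where k0: "fps_nth f k0 \<noteq> 0" using nz by (metis fps_ext fps_zero_nth)
  obtain r where r: "v (fps_nth f k0) = ereal r" using v_finite[OF k0] by blast
  have "r < (real (nat \<lceil>r * real e\<rceil>) + 1) / real e" using e by (simp add: field_simps) linarith
  then have "nat \<lceil>r * real e\<rceil> \<in> S" unfolding S_def using r by (intro CollectI exI[of _ k0]) simp
  define mu where "mu = (LEAST j. j \<in> S)"
  have muS: "mu \<in> S" unfolding mu_def by (rule LeastI) fact
  have mu_le: "ereal (real mu / real e) \<le> v (fps_nth f k)" for k
  proof (cases mu)
    case 0 then show ?thesis using in_RT_nth[OF f] by (simp add: int_ring_iff zero_ereal_def)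
  next
    case (Suc j)
    then have "j \<notin> S" unfolding mu_def using not_less_Least by (metis lessI)
    then show ?thesis using Suc by (auto simp: S_def not_less add.commute)
  qed
  define F where "F = Abs_fps (\<lambda>k. fps_nth f k / \<pi> ^ mu)"
  have vF: "v (fps_nth F k) = v (fps_nth f k) - ereal (real mu / real e)" for k
    unfolding F_def by (simp add: v_divide_pi_power)
  have "in_RT \<O> F" unfolding in_RT_def
  proof
    fix k
    have "fps_nth F k \<in> K"
      unfolding F_def using in_RT_nth[OF f] pi_K by (auto simp: int_ring_iff intro: K_divide K_power)
    moreover have "ereal 0 \<le> v (fps_nth F k)" unfolding vF using mu_le[of k] by (intro ereal_le_minus) simp
    ultimately show "fps_nth F k \<in> \<O>" by (simp add: int_ring_iff zero_ereal_def)
  qed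
  moreover have "f = fps_const (\<pi> ^ mu) * F"
    by (rule fps_ext) (simp add: fps_mult_left_const_nth F_def pi_nonzero)
  moreover have "\<exists>k. v (fps_nth F k) = 0"
  proof -
    obtain k where "v (fps_nth f k) < ereal (1 / real e + real mu / real e)"
      using muS unfolding S_def by (auto simp: add_divide_distrib add.commute)
    then have "v (fps_nth F k) < ereal (1 / real e)" unfolding vF by (rule ereal_less_minus)
    then show ?thesis using int_ring_val_less_pi \<open>in_RT \<O> F\<close> in_RT_nth by blast
  qed
  ultimately show ?thesis by (rule that)
qed

lemma pi_dvd_if_val_ge:
  assumes "x \<in> K" and "ereal (1 / real e) \<le> v x"
  shows "\<exists>r\<in>\<O>. x = \<pi> * r"
proof -
  have "ereal (0 + 1 / real e) \<le> v x" using assms(2) by simp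
  then have "0 \<le> v (x / \<pi>)"
    using v_divide_pi_power[of x 1] ereal_le_minus[of 0 "1 / real e"] by (simp add: zero_ereal_def)
  moreover have "x / \<pi> \<in> K" using assms(1) pi_K by (rule K_divide)
  ultimately show ?thesis using pi_nonzero by (intro bexI[of _ "x / \<pi>"]) (auto simp: int_ring_iff)
qed

lemma weierstrass_contraction:
  assumes Hi: "in_RT \<O> Hi" and P: "fps_val_ge P (1 / real e)" and AB: "fps_val_ge (A - B) a"
  shows "fps_val_ge (Hi * (1 - fps_shift lam (A * P)) - Hi * (1 - fps_shift lam (B * P))) (a + 1 / real e)"
proof -
  have "Hi * (1 - fps_shift lam (A * P)) - Hi * (1 - fps_shift lam (B * P))
      = - (Hi * fps_shift lam ((A - B) * P))"
    by (simp add: algebra_simps fps_shift_diff)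
  moreover have "fps_val_ge (Hi * fps_shift lam ((A - B) * P)) (0 + (a + 1 / real e))"
    by (intro fps_val_ge_mult fps_val_ge_shift in_RT_val_ge[OF Hi] AB P)
  ultimately show ?thesis by (simp add: fps_val_ge_uminus)
qed

text \<open>The fixed point \<open>q\<close> of the contraction above is what turns \<open>F = P + T^\<lambda> H\<close> into a
  distinguished polynomial: \<open>q F = q P + T^\<lambda> (1 - fps_shift \<lambda> (q P))\<close>.\<close>
lemma weierstrass_fixpoint:
  assumes Hi: "in_RT \<O> Hi" and P: "in_RT \<O> P" "fps_val_ge P (1 / real e)"
  obtains q where "in_RT \<O> q" "q = Hi * (1 - fps_shift lam (q * P))"
proof -
  have e: "real e > 0" using e_pos by simp
  define \<Phi> where "\<Phi> A = Hi * (1 - fps_shift lam (A * P))" for A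
  have contraction: "fps_val_ge (\<Phi> A - \<Phi> B) (a + 1 / real e)" if "fps_val_ge (A - B) a" for A B a
    unfolding \<Phi>_def using weierstrass_contraction[OF Hi P(2) that] .
  define qs where "qs j = (\<Phi> ^^ j) Hi" for j
  have qs_R: "in_RT \<O> (qs j)" for j
    by (induction j) (simp_all add: qs_def \<Phi>_def Hi P in_RT_mult in_RT_diff in_RT_one in_RT_shift)
  have step: "fps_val_ge (qs (Suc j) - qs j) ((real j + 1) / real e)" for j
  proof (induction j)
    case 0
    have "fps_val_ge (\<Phi> Hi - \<Phi> 0) (0 + 1 / real e)" by (rule contraction) (simp add: in_RT_val_ge Hi)
    then show ?case by (simp add: qs_def \<Phi>_def)
  next
    case (Suc j)
    then show ?case using contraction[OF Suc.IH] by (simp add: qs_def add_divide_distrib)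
  qed
  have "mono (\<lambda>j::nat. (real j + 1) / real e)" using e by (intro monoI) (simp add: divide_right_mono)
  moreover have "\<exists>N. M \<le> (real N + 1) / real e" for M
    using e by (intro exI[of _ "nat \<lceil>M * real e\<rceil>"]) (simp add: field_simps, linarith)
  ultimately obtain q where q: "in_RT \<O> q" and tail: "\<And>j. fps_val_ge (q - qs j) ((real j + 1) / real e)"
    using fps_limit_exists[of qs "\<lambda>j. (real j + 1) / real e", OF qs_R step] by blast
  have "fps_val_ge (q - \<Phi> q) (real j)" for j
  proof -
    have "q - \<Phi> q = (q - qs (Suc (j * e))) + (\<Phi> (qs (j * e)) - \<Phi> q)"
      by (simp add: qs_def)
    moreover have "fps_val_ge (q - qs (Suc (j * e))) (real j)"
      by (rule fps_val_ge_mono[OF tail]) (use e in \<open>simp add: field_simps\<close>)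
    moreover have "fps_val_ge (\<Phi> (qs (j * e)) - \<Phi> q) (real j)"
    proof (rule fps_val_ge_mono[OF contraction])
      show "fps_val_ge (qs (j * e) - q) ((real (j * e) + 1) / real e)"
        using fps_val_ge_uminus[OF tail[of "j * e"]] by simp
    qed (use e in \<open>simp add: field_simps\<close>)
    ultimately show ?thesis by (metis fps_val_ge_add)
  qed
  then have "q - \<Phi> q = 0" by (rule fps_val_ge_unbounded_imp_zero)
  then show ?thesis using that q unfolding \<Phi>_def by simp
qed

lemma split_at_first_unit_coeff:
  assumes F: "in_RT \<O> F" and unit: "\<exists>k. v (fps_nth F k) = 0"
  obtains lam P H where "F = P + fps_X ^ lam * H" "in_RT \<O> P" "fps_val_ge P (1 / real e)"
    "in_RT \<O> H" "v (fps_nth H 0) = 0"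
proof -
  define lam where "lam = (LEAST k. v (fps_nth F k) = 0)"
  have "v (fps_nth F lam) = 0" unfolding lam_def using unit by (rule LeastI_ex)
  moreover have "ereal (1 / real e) \<le> v (fps_nth F k)" if "k < lam" for k
    using not_less_Least[OF that[unfolded lam_def]] int_ring_val_less_pi in_RT_nth[OF F]
    by (metis not_le)
  moreover define P where "P = Abs_fps (\<lambda>k. if k < lam then fps_nth F k else 0)"
  ultimately have "in_RT \<O> P" "fps_val_ge P (1 / real e)"
    "in_RT \<O> (fps_shift lam F)" "v (fps_nth (fps_shift lam F) 0) = 0"
    using F unfolding in_RT_def P_def fps_val_ge_def by (auto simp: int_ring_0)
  moreover have "F = P + fps_X ^ lam * fps_shift lam F"
    by (rule fps_ext) (simp add: P_def fps_X_power_mult_nth)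
  ultimately show ?thesis using that by blast
qed

lemma weierstrass_fact_of_split:
  assumes F: "F = P + fps_X ^ lam * H" and P: "in_RT \<O> P" "fps_val_ge P (1 / real e)"
    and H: "in_RT \<O> H" "v (fps_nth H 0) = 0"
  shows "weierstrass_fact \<O> \<pi> F 0 lam"
proof -
  have H0: "fps_nth H 0 \<noteq> 0" using H(2) by auto
  obtain q where q: "in_RT \<O> q" and q_fix: "q = inverse H * (1 - fps_shift lam (q * P))"
    using weierstrass_fixpoint[OF in_RT_inverse[OF H] P] by blast
  have Hq: "H * q = 1 - fps_shift lam (q * P)"
    by (subst q_fix) (simp add: mult.assoc[symmetric] inverse_mult_eq_1'[OF H0])
  have qF: "q * F = q * P + (H * q) * fps_X ^ lam"
    unfolding F by (simp add: algebra_simps)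
  then have "fps_shift lam (q * F) = 1"
    by (simp only: fps_shift_add fps_shift_times_fps_X_power' Hq) simp
  then obtain g where g: "fps_of_poly g = q * F" "degree g = lam" "lead_coeff g = 1"
    "\<And>i. i < lam \<Longrightarrow> coeff g i = fps_nth (q * F) i"
    using fps_shift_eq_one_imp_monic_poly by blast
  have qP: "fps_val_ge (q * P) (0 + 1 / real e)" by (rule fps_val_ge_mult[OF in_RT_val_ge[OF q] P(2)])
  have "\<exists>r\<in>\<O>. coeff g i = \<pi> * r" if "i < lam" for i
  proof (rule pi_dvd_if_val_ge)
    have "coeff g i = fps_nth (q * P) i"
      using g(4)[OF that] that qF by (simp add: fps_X_power_mult_right_nth)
    then show "coeff g i \<in> K" "ereal (1 / real e) \<le> v (coeff g i)"
      using in_RT_nth[OF in_RT_mult[OF q P(1)]] qP unfolding fps_val_ge_def by (auto simp: int_ring_iff)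
  qed
  moreover have q0: "v (fps_nth q 0) = 0"
  proof -
    have "v (fps_nth (fps_shift lam (q * P)) 0) > 0"
      using qP e_pos unfolding fps_val_ge_def by (auto intro: less_le_trans[of _ "ereal (1 / real e)"])
    then have "v (1 + - fps_nth (fps_shift lam (q * P)) 0) = 0"
      using v_add_strict[of 1 "- fps_nth (fps_shift lam (q * P)) 0"] by simp
    then have "v (fps_nth H 0 * fps_nth q 0) = 0"
      using arg_cong[OF Hq, of "\<lambda>h. fps_nth h 0"] by simp
    then show ?thesis using H(2) by (simp add: v_mult)
  qed
  moreover from q0 have q0': "fps_nth q 0 \<noteq> 0" by auto
  then have "q * inverse q = 1" using inverse_mult_eq_1[OF q0'] by (simp add: mult.commute)
  then have "F = fps_const (\<pi> ^ 0) * fps_of_poly g * inverse q"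
    by (simp add: g(1) mult.commute[of q F] mult.assoc)
  ultimately show ?thesis
    unfolding weierstrass_fact_def using q g(2,3) in_RT_inverse[OF q q0] inverse_mult_eq_1[OF q0']
    by (intro exI[of _ g] exI[of _ "inverse q"] exI[of _ q]) auto
qed

lemma weierstrass_fact_exists:
  assumes "in_RT \<O> f" and "f \<noteq> 0"
  obtains mu lam where "weierstrass_fact \<O> \<pi> f mu lam"
proof -
  obtain mu F where F: "in_RT \<O> F" "f = fps_const (\<pi> ^ mu) * F" "\<exists>k. v (fps_nth F k) = 0"
    using fps_content_factor[OF assms] .
  obtain lam P H where "F = P + fps_X ^ lam * H" "in_RT \<O> P" "fps_val_ge P (1 / real e)"
    "in_RT \<O> H" "v (fps_nth H 0) = 0"
    using split_at_first_unit_coeff[OF F(1,3)] .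
  then have "weierstrass_fact \<O> \<pi> F 0 lam" by (rule weierstrass_fact_of_split)
  then have "weierstrass_fact \<O> \<pi> f mu lam"
    unfolding weierstrass_fact_def F(2) by (auto simp: mult.assoc)
  then show ?thesis by (rule that)
qed

end

section \<open>Roots of unity and characters\<close>

lemma power_power_swap: "((x::'a::monoid_mult) ^ i) ^ t = (x ^ t) ^ i"
  by (metis power_mult mult.commute)

lemma dvd_add_diff_iff_eq:
  fixes x y q :: nat
  assumes "x < q" "y < q"
  shows "q dvd x + (q - y) \<longleftrightarrow> x = y"
proof
  assume "q dvd x + (q - y)"
  then obtain c where c: "x + (q - y) = q * c" by blast
  moreover have "0 < x + (q - y)" "x + (q - y) < 2 * q" using assms by auto
  ultimately have "0 < c" "c < 2" by (auto simp: mult.commute)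
  then have "c = 1" by simp
  then show "x = y" using c assms by simp
qed (use assms in simp)

lemma power_mod_order: "(w::'a::comm_monoid_mult) ^ Q = 1 \<Longrightarrow> w ^ x = w ^ (x mod Q)"
  by (metis mult_div_mod_eq power_add power_mult power_one mult_1)

lemma primitive_root_powers_inj:
  fixes \<omega> :: "'a::field"
  assumes "\<omega> \<noteq> 0" and prim: "\<And>j. 0 < j \<Longrightarrow> j < P \<Longrightarrow> \<omega> ^ j \<noteq> 1"
  shows "inj_on (\<lambda>i. \<omega> ^ i) {..<P}"
proof (rule inj_onI)
  have *: "\<omega> ^ i \<noteq> \<omega> ^ j" if "i < j" "j < P" for i j
  proof
    assume "\<omega> ^ i = \<omega> ^ j"
    moreover have "\<omega> ^ j = \<omega> ^ i * \<omega> ^ (j - i)" using that by (simp add: power_add[symmetric])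
    ultimately have "\<omega> ^ (j - i) = 1" using assms(1) by simp
    then show False using prim[of "j - i"] that by simp
  qed
  fix i j assume "i \<in> {..<P}" "j \<in> {..<P}" "\<omega> ^ i = \<omega> ^ j"
  then show "i = j" using *[of i j] *[of j i] by (cases i j rule: linorder_cases) auto
qed

lemma prod_shifted_roots_of_unity:
  fixes \<omega> r x :: "'a::field"
  assumes om: "\<omega> ^ P = 1" and prim: "\<And>j. 0 < j \<Longrightarrow> j < P \<Longrightarrow> \<omega> ^ j \<noteq> 1" and r: "r \<noteq> 0"
    and P: "P > 0"
  shows "(\<Prod>i<P. x - r * \<omega> ^ i) = x ^ P - r ^ P"
proof -
  let ?p = "\<Prod>i<P. [:- (r * \<omega> ^ i), 1:]"
  let ?q = "monom 1 P - [:r ^ P:]"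
  let ?A = "(\<lambda>i. r * \<omega> ^ i) ` {..<P}"
  have "\<omega> \<noteq> 0" using om P by (cases "\<omega> = 0") (auto simp: power_0_left)
  then have "inj_on (\<lambda>i. r * \<omega> ^ i) {..<P}"
    using primitive_root_powers_inj[OF _ prim] r by (auto simp: inj_on_def)
  then have cardA: "card ?A = P" by (simp add: card_image)
  have degp: "degree ?p = P" by (subst degree_prod_eq_sum_degree) auto
  have "?p = ?q"
  proof (rule poly_eqI_degree_lead_coeff[of _ P _ ?A])
    show "coeff ?p P = coeff ?q P"
      using lead_coeff_prod[of "\<lambda>i. [:- (r * \<omega> ^ i), 1:]" "{..<P}"] degp P by (cases P) auto
    show "degree ?q \<le> P" by (intro degree_diff_le) (auto simp: degree_monom_le)
    fix z assume "z \<in> ?A"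
    then obtain i where i: "i < P" "z = r * \<omega> ^ i" by auto
    have "z ^ P = r ^ P * (\<omega> ^ P) ^ i"
      using i by (simp add: power_mult_distrib power_mult[symmetric] mult.commute)
    then show "poly ?p z = poly ?q z"
      using i om by (auto simp: poly_prod prod_zero_iff poly_monom intro!: bexI[of _ i])
  qed (use cardA degp in auto)
  then have "poly ?p x = poly ?q x" by simp
  then show ?thesis by (simp add: poly_prod poly_monom)
qed

lemma prod_one_minus_roots_of_unity:
  fixes \<omega> :: "'a::field"
  assumes om: "\<omega> ^ P = 1" and prim: "\<And>j. 0 < j \<Longrightarrow> j < P \<Longrightarrow> \<omega> ^ j \<noteq> 1" and P: "P > 0"
  shows "(\<Prod>i\<in>{1..<P}. 1 - \<omega> ^ i) = of_nat P"
proof -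
  let ?p = "\<Prod>i\<in>{1..<P}. [:- (\<omega> ^ i), 1:]"
  let ?q = "\<Sum>j<P. monom (1::'a) j"
  let ?A = "(\<lambda>i. \<omega> ^ i) ` {1..<P}"
  have "\<omega> \<noteq> 0" using om P by (cases "\<omega> = 0") (auto simp: power_0_left)
  then have "inj_on (\<lambda>i. \<omega> ^ i) {..<P}" using prim by (rule primitive_root_powers_inj)
  then have "inj_on (\<lambda>i. \<omega> ^ i) {1..<P}" by (rule inj_on_subset) auto
  then have cardA: "card ?A = P - 1" by (simp add: card_image)
  have degp: "degree ?p = P - 1" by (subst degree_prod_eq_sum_degree) auto
  have "?p = ?q"
  proof (rule poly_eqI_degree_lead_coeff[of _ "P - 1" _ ?A])
    show "coeff ?p (P - 1) = coeff ?q (P - 1)"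
      using lead_coeff_prod[of "\<lambda>i. [:- (\<omega> ^ i), 1:]" "{1..<P}"] degp P by (simp add: coeff_sum)
    show "degree ?q \<le> P - 1" by (rule degree_le) (auto simp: coeff_sum)
    fix z assume "z \<in> ?A"
    then obtain i where i: "i \<in> {1..<P}" "z = \<omega> ^ i" by blast
    have "z \<noteq> 1" using prim[of i] i by auto
    moreover have "z ^ P = 1" using i om by (simp add: power_mult[symmetric] mult.commute power_mult)
    ultimately have "(\<Sum>j<P. z ^ j) = 0" using geometric_sum[of z P] by simp
    then show "poly ?p z = poly ?q z"
      using i by (auto simp: poly_prod poly_sum poly_monom prod_zero_iff intro!: bexI[of _ i])
  qed (use cardA degp in auto)
  then have "poly ?p 1 = poly ?q 1" by simp
  then show ?thesis by (simp add: poly_prod poly_sum poly_monom)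
qed

lemma char_one_nonzero: "\<chi> \<in> chars N \<Longrightarrow> \<chi> 1 \<noteq> 0"
proof -
  assume c: "\<chi> \<in> chars N"
  have "\<chi> (1 + (-1)) = \<chi> 1 * \<chi> (-1)" using c unfolding chars_def by blast
  then have "\<chi> 1 * \<chi> (-1) = 1" using c unfolding chars_def by simp
  then show ?thesis by auto
qed

lemma char_eq_power_int: "\<chi> \<in> chars N \<Longrightarrow> \<chi> a = \<chi> 1 powi a"
proof -
  assume c: "\<chi> \<in> chars N"
  have mult: "\<chi> (a + b) = \<chi> a * \<chi> b" and c0: "\<chi> 0 = 1" for a b using c unfolding chars_def by blast+
  have nat: "\<chi> (int n) = \<chi> 1 ^ n" for n
  proof (induction n)
    case (Suc n)
    have "\<chi> (int (Suc n)) = \<chi> (int n) * \<chi> 1" using mult[of "int n" 1] by (simp add: add.commute)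
    then show ?case using Suc by simp
  qed (simp add: c0)
  show ?thesis
  proof (cases "a \<ge> 0")
    case True then show ?thesis using nat[of "nat a"] by (simp add: power_int_def)
  next
    case False
    then obtain n where a: "a = - int n" by (metis neg_0_le_iff_le nle_le nonneg_int_cases add.inverse_inverse)
    have "\<chi> 1 ^ n * \<chi> a = 1" using mult[of "int n" a] nat[of n] a c0 by simp
    then show ?thesis using a char_one_nonzero[OF c] by (simp add: power_int_minus field_simps)
  qed
qed

lemma power_int_in_chars: "w ^ N = 1 \<Longrightarrow> N > 0 \<Longrightarrow> (\<lambda>a. w powi a) \<in> chars N"
proof -
  assume w: "w ^ N = 1" "N > 0"
  then have "w \<noteq> 0" by (cases "w = 0") (auto simp: power_0_left)
  then show ?thesis using w unfolding chars_def by (simp add: power_int_add)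
qed

locale compatible_root_system =
  fixes p :: nat and \<zeta> :: "nat \<Rightarrow> 'a::field"
  assumes p_gt_1: "1 < p" and roots: "compatible_roots p \<zeta>"
begin

lemma zeta_power_order: "\<zeta> k ^ (p ^ k) = 1"
  and zeta_primitive: "0 < j \<Longrightarrow> j < p ^ k \<Longrightarrow> \<zeta> k ^ j \<noteq> 1"
  and zeta_Suc_power: "\<zeta> (Suc k) ^ p = \<zeta> k"
  using roots unfolding compatible_roots_def by blast+

lemma zeta_add_power: "\<zeta> (k + j) ^ (p ^ j) = \<zeta> k"
proof (induction j)
  case (Suc j)
  have "\<zeta> (k + Suc j) ^ (p ^ Suc j) = (\<zeta> (Suc (k + j)) ^ p) ^ (p ^ j)"
    by (simp add: power_mult[symmetric] mult.commute)
  then show ?case using Suc zeta_Suc_power by simp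
qed simp

lemma zeta_nonzero: "\<zeta> k \<noteq> 0"
  using zeta_power_order[of k] p_gt_1 by (cases "\<zeta> k = 0") (auto simp: power_0_left)

lemma zeta_neq_one: "k \<ge> 1 \<Longrightarrow> \<zeta> k \<noteq> 1"
  using zeta_primitive[of 1 k] p_gt_1 one_less_power[of p k] by simp

lemma zeta_power_power_order: "(\<zeta> k ^ i) ^ (p ^ k) = 1"
  using zeta_power_order[of k] by (simp add: power_power_swap[of _ i])

lemma zeta_power_eq_one_iff: "\<zeta> k ^ t = 1 \<longleftrightarrow> p ^ k dvd t"
proof
  assume "\<zeta> k ^ t = 1"
  then have "\<zeta> k ^ (t mod p ^ k) = 1" using power_mod_order[OF zeta_power_order] by metis
  then show "p ^ k dvd t"
    using zeta_primitive[of "t mod p ^ k" k] p_gt_1 by (cases "t mod p ^ k = 0") (auto simp: dvd_eq_mod_eq_0)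
qed (auto simp: power_mult zeta_power_order elim!: dvdE)

lemma zeta_powers_inj: "inj_on (\<lambda>i. \<zeta> k ^ i) {..<p ^ k}"
  using primitive_root_powers_inj[OF zeta_nonzero zeta_primitive] .

lemma root_of_unity_is_zeta_power: "w ^ (p ^ k) = 1 \<Longrightarrow> w \<in> (\<lambda>i. \<zeta> k ^ i) ` {..<p ^ k}"
proof -
  assume w: "w ^ (p ^ k) = 1"
  let ?q = "monom (1::'a) (p ^ k) - 1"
  have pk: "p ^ k > 0" using p_gt_1 by simp
  have q0: "?q \<noteq> 0"
  proof
    assume "?q = 0"
    then have "coeff ?q (p ^ k) = 0" by (simp only: coeff_0)
    then show False using pk by simp
  qed
  let ?S = "{x. poly ?q x = 0}"
  have sub: "(\<lambda>i. \<zeta> k ^ i) ` {..<p ^ k} \<subseteq> ?S"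
    using zeta_power_power_order by (auto simp: poly_monom)
  have "degree ?q \<le> p ^ k" by (intro degree_diff_le) (auto simp: degree_monom_le)
  then have "card ?S \<le> p ^ k" using card_poly_roots_bound[OF q0] by simp
  also have "\<dots> = card ((\<lambda>i. \<zeta> k ^ i) ` {..<p ^ k})" using card_image[OF zeta_powers_inj] by simp
  finally have "(\<lambda>i. \<zeta> k ^ i) ` {..<p ^ k} = ?S" using card_seteq[OF poly_roots_finite[OF q0] sub] by simp
  then show ?thesis using w by (simp add: poly_monom)
qed

lemma sum_zeta_powers: "(\<Sum>i<p ^ k. (\<zeta> k ^ i) ^ t) = (if p ^ k dvd t then of_nat (p ^ k) else 0)"
proof (cases "p ^ k dvd t")
  case True
  then have "(\<zeta> k ^ i) ^ t = 1" for i
    using zeta_power_eq_one_iff[of k t] by (simp add: power_power_swap[of _ i])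
  then show ?thesis using True by simp
next
  case False
  have "\<zeta> k ^ t \<noteq> 1" using zeta_power_eq_one_iff False by simp
  moreover have "(\<Sum>i<p ^ k. (\<zeta> k ^ i) ^ t) = (\<Sum>i<p ^ k. (\<zeta> k ^ t) ^ i)"
    by (simp add: power_power_swap[of _ _ t])
  ultimately show ?thesis using geometric_sum[of "\<zeta> k ^ t" "p ^ k"] zeta_power_power_order False by simp
qed

definition zeta_char :: "nat \<Rightarrow> nat \<Rightarrow> int \<Rightarrow> 'a" where
  "zeta_char k i = (\<lambda>a. (\<zeta> k ^ i) powi a)"

lemma chars_eq_zeta_chars: "chars (p ^ k) = zeta_char k ` {..<p ^ k}"
proof
  show "chars (p ^ k) \<subseteq> zeta_char k ` {..<p ^ k}"
  proof
    fix \<chi> :: "int \<Rightarrow> 'a" assume c: "\<chi> \<in> chars (p ^ k)"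
    have "\<chi> (0 + int (p ^ k)) = \<chi> 0" "\<chi> 0 = 1" using c unfolding chars_def by blast+
    moreover have "\<chi> 1 powi int (p ^ k) = \<chi> 1 ^ (p ^ k)" by (rule power_int_of_nat)
    ultimately have "\<chi> 1 ^ (p ^ k) = 1" using char_eq_power_int[OF c, of "int (p ^ k)"] by simp
    then obtain i where i: "i < p ^ k" "\<chi> 1 = \<zeta> k ^ i" using root_of_unity_is_zeta_power by blast
    have "\<chi> = zeta_char k i"
      unfolding zeta_char_def using char_eq_power_int[OF c] i(2) by (intro ext) metis
    then show "\<chi> \<in> zeta_char k ` {..<p ^ k}" using i by blast
  qed
  show "zeta_char k ` {..<p ^ k} \<subseteq> chars (p ^ k)"
  proof
    fix \<chi> assume "\<chi> \<in> zeta_char k ` {..<p ^ k}"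
    then obtain i where "\<chi> = zeta_char k i" by blast
    then show "\<chi> \<in> chars (p ^ k)"
      using power_int_in_chars[OF zeta_power_power_order[of k i]] p_gt_1 by (simp add: zeta_char_def)
  qed
qed

lemma zeta_char_inj: "inj_on (zeta_char k) {..<p ^ k}"
proof (rule inj_onI)
  fix i j assume "i \<in> {..<p ^ k}" "j \<in> {..<p ^ k}" "zeta_char k i = zeta_char k j"
  moreover from this(3) have "zeta_char k i 1 = zeta_char k j 1" by simp
  then have "\<zeta> k ^ i = \<zeta> k ^ j" by (simp add: zeta_char_def)
  ultimately show "i = j" using zeta_powers_inj by (auto dest: inj_onD)
qed

lemma sum_chars_eq: "(\<Sum>\<chi>\<in>chars (p ^ k). F \<chi>) = (\<Sum>i<p ^ k. F (zeta_char k i))"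
  using sum.reindex[OF zeta_char_inj, of F] chars_eq_zeta_chars by simp

lemma finite_chars: "finite (chars (p ^ k) :: (int \<Rightarrow> 'a) set)"
  by (simp add: chars_eq_zeta_chars)

lemma inverse_diff_root_of_unity:
  fixes z w :: 'a
  assumes "w ^ q = 1" and "z ^ q \<noteq> 1"
  shows "1 / (z - w) = (\<Sum>t<q. w ^ (q - Suc t) * z ^ t) / (z ^ q - 1)"
proof -
  have "z - w \<noteq> 0" using assms by auto
  moreover have "z ^ q - w ^ q = (z - w) * (\<Sum>t<q. w ^ (q - Suc t) * z ^ t)"
    by (rule power_diff_sumr2)
  ultimately show ?thesis using assms by (simp add: field_simps)
qed

lemma sum_zeta_power_div_diff:
  fixes z :: 'a and a :: nat
  assumes z: "z ^ (p ^ k) \<noteq> 1" and a: "a < p ^ k"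
  shows "(\<Sum>i<p ^ k. (\<zeta> k ^ i) ^ (a + 1) / (z - \<zeta> k ^ i)) = of_nat (p ^ k) * z ^ a / (z ^ (p ^ k) - 1)"
proof -
  let ?q = "p ^ k"
  have summand: "(\<zeta> k ^ i) ^ (a + 1) / (z - \<zeta> k ^ i)
      = (\<Sum>t<?q. z ^ t * (\<zeta> k ^ i) ^ (a + (?q - t))) / (z ^ ?q - 1)" for i
  proof -
    let ?w = "\<zeta> k ^ i"
    have exponent: "?w ^ (a + 1) * (?w ^ (?q - Suc t) * z ^ t) = z ^ t * ?w ^ (a + (?q - t))"
      if "t < ?q" for t
    proof -
      have "a + 1 + (?q - Suc t) = a + (?q - t)" using that by simp
      then show ?thesis by (metis mult.commute mult.left_commute power_add)
    qed
    have "?w ^ (a + 1) / (z - ?w) = ?w ^ (a + 1) * (1 / (z - ?w))" by simp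
    also have "\<dots> = (\<Sum>t<?q. ?w ^ (a + 1) * (?w ^ (?q - Suc t) * z ^ t)) / (z ^ ?q - 1)"
      by (simp only: inverse_diff_root_of_unity[OF zeta_power_power_order z] sum_distrib_left
          times_divide_eq_right)
    also have "\<dots> = (\<Sum>t<?q. z ^ t * ?w ^ (a + (?q - t))) / (z ^ ?q - 1)"
      by (rule arg_cong[where f = "\<lambda>x. x / _"], rule sum.cong[OF refl], rule exponent) simp
    finally show ?thesis .
  qed
  have "(\<Sum>i<?q. (\<zeta> k ^ i) ^ (a + 1) / (z - \<zeta> k ^ i))
      = (\<Sum>i<?q. \<Sum>t<?q. z ^ t * (\<zeta> k ^ i) ^ (a + (?q - t))) / (z ^ ?q - 1)"
    unfolding summand by (simp add: sum_divide_distrib)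
  also have "(\<Sum>i<?q. \<Sum>t<?q. z ^ t * (\<zeta> k ^ i) ^ (a + (?q - t)))
      = (\<Sum>t<?q. z ^ t * (\<Sum>i<?q. (\<zeta> k ^ i) ^ (a + (?q - t))))"
    by (subst sum.swap) (simp add: sum_distrib_left)
  also have "\<dots> = (\<Sum>t<?q. if t = a then z ^ t * of_nat ?q else 0)"
  proof (intro sum.cong refl)
    fix t assume "t \<in> {..<?q}"
    then have "?q dvd a + (?q - t) \<longleftrightarrow> t = a" using dvd_add_diff_iff_eq[OF a, of t] by auto
    then show "z ^ t * (\<Sum>i<?q. (\<zeta> k ^ i) ^ (a + (?q - t))) = (if t = a then z ^ t * of_nat ?q else 0)"
      using sum_zeta_powers[of k "a + (?q - t)"] by auto
  qed
  also have "\<dots> = z ^ a * of_nat ?q" using a by (simp add: sum.delta)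
  finally show ?thesis by (simp add: mult.commute)
qed

lemma sum_chars_u_fac:
  assumes m: "1 \<le> m" and a: "0 \<le> a" "a < int (p ^ m)"
  shows "(\<Sum>\<chi>\<in>chars (p ^ m). u_fac m \<zeta> j \<chi> * \<chi> a)
     = of_nat (p ^ m) * ((\<zeta> (m * (j + 2)) - 1) * \<zeta> (m * (j + 2)) ^ nat a / (\<zeta> (m * (j + 2)) ^ (p ^ m) - 1))"
proof -
  define z where "z = \<zeta> (m * (j + 2))"
  have "z ^ (p ^ m) = \<zeta> (m * (j + 1))"
    unfolding z_def using zeta_add_power[of "m * (j + 1)" m] by (simp add: algebra_simps)
  then have z: "z ^ (p ^ m) \<noteq> 1" using zeta_neq_one m by simp
  have summand: "u_fac m \<zeta> j (zeta_char m i) * zeta_char m i a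
      = (z - 1) * ((\<zeta> m ^ i) ^ (nat a + 1) / (z - \<zeta> m ^ i))" for i
  proof -
    define w where "w = \<zeta> m ^ i"
    have w0: "w \<noteq> 0" unfolding w_def using zeta_nonzero by simp
    have zw: "z - w \<noteq> 0" using zeta_power_power_order[of m i] z by (auto simp: w_def)
    have ca: "zeta_char m i a = w ^ nat a" unfolding zeta_char_def w_def using a(1)
      by (metis nonneg_eq_int power_int_of_nat nat_int)
    have d: "z * inverse w - 1 = (z - w) / w" using w0 by (simp add: field_simps)
    have "u_fac m \<zeta> j (zeta_char m i) * zeta_char m i a = (z - 1) / ((z - w) / w) * w ^ nat a"
      unfolding u_fac_def ca z_def[symmetric] by (simp add: zeta_char_def w_def[symmetric] d)
    also have "\<dots> = (z - 1) * (w ^ (nat a + 1) / (z - w))" using w0 zw by (simp add: field_simps)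
    finally show ?thesis unfolding w_def .
  qed
  have "(\<Sum>\<chi>\<in>chars (p ^ m). u_fac m \<zeta> j \<chi> * \<chi> a)
      = (z - 1) * (\<Sum>i<p ^ m. (\<zeta> m ^ i) ^ (nat a + 1) / (z - \<zeta> m ^ i))"
    by (simp add: sum_chars_eq summand sum_distrib_left)
  also have "(\<Sum>i<p ^ m. (\<zeta> m ^ i) ^ (nat a + 1) / (z - \<zeta> m ^ i))
      = of_nat (p ^ m) * z ^ nat a / (z ^ (p ^ m) - 1)"
    by (rule sum_zeta_power_div_diff[OF z]) (use a in \<open>simp add: nat_less_iff\<close>)
  finally show ?thesis unfolding z_def by (simp add: algebra_simps)
qed

end

section \<open>The \<open>p\<close>-adic valuation\<close>

locale p_adic_valued_field = valued_field v for v :: "'a::field_char_0 \<Rightarrow> ereal" +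
  fixes p :: nat
  assumes prime: "prime p" and v_p: "v (of_nat p) = 1"
begin

lemma p_gt_1: "1 < p"
  using prime prime_gt_1_nat by blast

lemma v_of_int_dvd: "int p ^ M dvd z \<Longrightarrow> ereal (real M) \<le> v (of_int z)"
proof -
  assume "int p ^ M dvd z"
  then obtain t where t: "z = int p ^ M * t" by blast
  have "v ((of_nat p :: 'a) ^ M) = ereal (real M)"
    using v_power[of "of_nat p" 1 M] v_p by (simp add: one_ereal_def)
  then have "v (of_int z) = ereal (real M) + v (of_int t)" by (simp add: t v_mult)
  then show ?thesis using add_left_mono[OF v_of_int_ge[of t], of "ereal (real M)"] by simp
qed

text \<open>Binomial coefficients are uniformly \<open>p\<close>-adically continuous: since
  \<open>k! (x choose k) = x (x - 1) \<dots> (x - k + 1)\<close>, the only loss is the fixed valuation of \<open>k!\<close>.\<close>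
lemma v_binomial_diff_ge:
  "\<exists>C. \<forall>M x y. x mod p ^ M = y mod p ^ M \<longrightarrow>
      ereal (real M - C) \<le> v (of_nat (x choose k) - of_nat (y choose k))"
proof -
  obtain C where C: "v (fact k :: 'a) = ereal C" using v_finite[of "fact k"] by auto
  have "ereal (real M - C) \<le> v (of_nat (x choose k) - of_nat (y choose k))"
    if xy: "x mod p ^ M = y mod p ^ M" for M x y
  proof -
    have fact_choose: "fact k * (of_nat (n choose k) :: 'a) = (\<Prod>i<k. of_nat n - of_nat i)" for n
      by (simp add: binomial_gbinomial gbinomial_mult_fact atLeast0LessThan)
    have "int x mod int (p ^ M) = int y mod int (p ^ M)" using xy by (metis of_nat_mod)
    then have dvd: "int p ^ M dvd (int x - int y)" by (simp add: mod_eq_dvd_iff of_nat_power)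
    have "ereal (real M) \<le> v ((\<Prod>i<k. (of_nat x - of_nat i :: 'a)) - (\<Prod>i<k. of_nat y - of_nat i))"
    proof (rule v_prod_diff_ge)
      fix i
      show "0 \<le> v (of_nat x - of_nat i :: 'a) \<and> 0 \<le> v (of_nat y - of_nat i :: 'a) \<and>
          ereal (real M) \<le> v ((of_nat x - of_nat i) - (of_nat y - of_nat i) :: 'a)"
        using v_of_int_ge[of "int x - int i"] v_of_int_ge[of "int y - int i"] v_of_int_dvd[OF dvd]
        by simp
    qed
    then have "ereal (real M) \<le> ereal C + v (of_nat (x choose k) - of_nat (y choose k) :: 'a)"
      using C by (simp add: fact_choose[symmetric] right_diff_distrib[symmetric] v_mult)
    then show ?thesis by (cases "v (of_nat (x choose k) - of_nat (y choose k) :: 'a)") auto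
  qed
  then show ?thesis by blast
qed

end

locale p_adic_roots = p_adic_valued_field v p for v :: "'a::field_char_0 \<Rightarrow> ereal" and p +
  fixes \<zeta> :: "nat \<Rightarrow> 'a"
  assumes roots: "compatible_roots p \<zeta>"

sublocale p_adic_roots \<subseteq> compatible_root_system p \<zeta>
  using p_gt_1 roots by unfold_locales

context p_adic_roots
begin

definition cyclo_val :: "nat \<Rightarrow> real" where
  "cyclo_val k = 1 / ((real p - 1) * real p ^ (k - 1))"

lemma cyclo_val_pos: "cyclo_val k > 0"
  using p_gt_1 by (simp add: cyclo_val_def)

lemma cyclo_val_eq: "1 \<le> k \<Longrightarrow> cyclo_val k = 1 / (real p ^ k - real p ^ (k - 1))"
  unfolding cyclo_val_def by (cases k) (simp_all add: algebra_simps)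

lemma v_zeta_power_minus_one: "coprime b (p ^ k) \<Longrightarrow> v (\<zeta> k ^ b - 1) = v (\<zeta> k - 1)"
  using v_root_of_unity_power_minus_one[OF zeta_power_order] p_gt_1 by simp

text \<open>From \<open>(\<Prod>i\<in>{1..<p}. 1 - \<zeta> 1 ^ i) = p\<close>, all factors having the same valuation.\<close>
lemma v_zeta_one_minus_one: "v (\<zeta> 1 - 1) = ereal (cyclo_val 1)"
proof -
  have P: "(\<Prod>i\<in>{1..<p}. 1 - \<zeta> 1 ^ i) = of_nat p"
    using prod_one_minus_roots_of_unity[of "\<zeta> 1" p] zeta_power_order[of 1] zeta_primitive[of _ 1] p_gt_1
    by simp
  have each: "v (1 - \<zeta> 1 ^ i) = v (\<zeta> 1 - 1)" if "i \<in> {1..<p}" for i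
  proof -
    have "coprime p i" using prime that by (intro prime_imp_coprime) (auto dest: nat_dvd_not_less)
    then show ?thesis using v_zeta_power_minus_one[of i 1] by (simp add: coprime_commute v_minus_commute)
  qed
  obtain r where r: "v (\<zeta> 1 - 1) = ereal r" using v_finite zeta_neq_one[of 1] by force
  have "ereal 1 = (\<Sum>i\<in>{1..<p}. v (1 - \<zeta> 1 ^ i))"
    using v_p P v_prod[of "{1..<p}" "\<lambda>i. 1 - \<zeta> 1 ^ i"] by (simp add: one_ereal_def)
  also have "\<dots> = ereal (real (p - 1) * r)" using each r by (simp add: sum_ereal[symmetric])
  finally have "(real p - 1) * r = 1" using p_gt_1 by (simp add: of_nat_diff)
  then show ?thesis using r p_gt_1 by (simp add: cyclo_val_def field_simps)
qed

text \<open>From \<open>(\<Prod>i<p. 1 - \<zeta> (k + 1) * \<zeta> 1 ^ i) = 1 - \<zeta> k\<close>, all factors again having the same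
  valuation.\<close>
lemma v_zeta_Suc_minus_one:
  assumes k: "k \<ge> 1" and vk: "v (\<zeta> k - 1) = ereal (real p * r)"
  shows "v (\<zeta> (Suc k) - 1) = ereal r"
proof -
  have P: "(\<Prod>i<p. 1 - \<zeta> (Suc k) * \<zeta> 1 ^ i) = 1 - \<zeta> k"
    using prod_shifted_roots_of_unity[of "\<zeta> 1" p "\<zeta> (Suc k)" 1] zeta_power_order[of 1]
      zeta_primitive[of _ 1] zeta_nonzero p_gt_1 zeta_Suc_power by simp
  have each: "v (1 - \<zeta> (Suc k) * \<zeta> 1 ^ i) = v (\<zeta> (Suc k) - 1)" for i
  proof -
    have "\<zeta> 1 ^ i = \<zeta> (Suc k) ^ (p ^ k * i)"
      using zeta_add_power[of 1 k] by (simp add: power_mult)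
    then have e: "\<zeta> (Suc k) * \<zeta> 1 ^ i = \<zeta> (Suc k) ^ (1 + i * p ^ k)"
      by (simp add: power_add mult.commute)
    have "p dvd i * p ^ k" using k by (simp add: dvd_power)
    then have "\<not> p dvd 1 + i * p ^ k" using p_gt_1 dvd_add_left_iff[of p "i * p ^ k" 1] by auto
    then have "coprime (1 + i * p ^ k) (p ^ Suc k)"
      using prime by (simp add: prime_imp_coprime coprime_commute)
    then have "v (\<zeta> (Suc k) ^ (1 + i * p ^ k) - 1) = v (\<zeta> (Suc k) - 1)"
      by (rule v_zeta_power_minus_one)
    moreover have "v (1 - \<zeta> (Suc k) * \<zeta> 1 ^ i) = v (\<zeta> (Suc k) ^ (1 + i * p ^ k) - 1)"
      by (subst e) (rule v_minus_commute)
    ultimately show ?thesis by simp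
  qed
  obtain s where s: "v (\<zeta> (Suc k) - 1) = ereal s" using v_finite zeta_neq_one[of "Suc k"] by force
  have "v (\<zeta> k - 1) = (\<Sum>i<p. v (1 - \<zeta> (Suc k) * \<zeta> 1 ^ i))"
    using P v_prod[of "{..<p}" "\<lambda>i. 1 - \<zeta> (Suc k) * \<zeta> 1 ^ i"] by (simp add: v_minus_commute)
  also have "\<dots> = ereal (real p * s)" using each s by (simp add: sum_ereal[symmetric])
  finally show ?thesis using vk s p_gt_1 by simp
qed

lemma v_zeta_minus_one: "k \<ge> 1 \<Longrightarrow> v (\<zeta> k - 1) = ereal (cyclo_val k)"
proof (induction k rule: dec_induct)
  case (step k)
  have "cyclo_val k = real p * cyclo_val (Suc k)"
    using step(1) p_gt_1 by (cases k) (auto simp: cyclo_val_def field_simps)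
  then show ?case using v_zeta_Suc_minus_one[OF step(1)] step(3) by simp
qed (rule v_zeta_one_minus_one)

end

section \<open>Digit expansions\<close>

lemma finite_digits: "finite (digits p m n)"
  unfolding digits_def by (intro finite_PiE) auto

lemma digit_val_Suc: "digit_val p m (Suc n) a = digit_val p m n a + nat (a (Suc n)) * p ^ (m * n)"
  unfolding digit_val_def by simp

lemma digit_val_cong: "(\<And>i. i \<in> {1..n} \<Longrightarrow> a i = b i) \<Longrightarrow> digit_val p m n a = digit_val p m n b"
  unfolding digit_val_def by (intro sum.cong) auto

lemma digit_val_less:
  assumes "\<And>i. i \<in> {1..n} \<Longrightarrow> 0 \<le> a i \<and> a i < int (p ^ m)"
  shows "digit_val p m n a < p ^ (m * n)"
  using assms
proof (induction n)
  case (Suc n)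
  have "nat (a (Suc n)) < p ^ m" using Suc.prems[of "Suc n"] by (simp add: nat_less_iff)
  then have "nat (a (Suc n)) * p ^ (m * n) \<le> (p ^ m - 1) * p ^ (m * n)" by (intro mult_right_mono) auto
  moreover have "(p ^ m - 1) * p ^ (m * n) + p ^ (m * n) = p ^ (m * Suc n)"
    using \<open>nat (a (Suc n)) < p ^ m\<close> by (simp add: diff_mult_distrib power_add)
  moreover have "digit_val p m n a < p ^ (m * n)" using Suc by auto
  ultimately show ?case using digit_val_Suc[of p m n a] by linarith
qed (simp add: digit_val_def)

lemma digit_val_split:
  assumes "n \<le> n'"
  shows "\<exists>t. digit_val p m n' a = digit_val p m n a + p ^ (m * n) * t"
  using assms
proof (induction n' rule: dec_induct)
  case (step n')
  then obtain t where t: "digit_val p m n' a = digit_val p m n a + p ^ (m * n) * t" by blast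
  have "p ^ (m * n') = p ^ (m * n) * p ^ (m * (n' - n))"
    using step(1) by (simp add: power_add[symmetric] diff_mult_distrib2)
  then have "digit_val p m (Suc n') a
      = digit_val p m n a + p ^ (m * n) * (t + nat (a (Suc n')) * p ^ (m * (n' - n)))"
    using t by (simp add: digit_val_Suc algebra_simps)
  then show ?case by blast
qed (intro exI[of _ 0], simp)

lemma digit_val_mod_eq:
  assumes "n \<le> n'" "M \<le> m * n"
  shows "digit_val p m n' a mod p ^ M = digit_val p m n a mod p ^ M"
proof -
  obtain t where t: "digit_val p m n' a = digit_val p m n a + p ^ (m * n) * t"
    using digit_val_split[OF assms(1)] by blast
  have "p ^ M dvd p ^ (m * n)" using assms(2) by (simp add: le_imp_power_dvd)
  then show ?thesis using t by (metis dvd_mult2 mod_mult_self2 mult.commute dvd_def mult.assoc)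
qed

lemma digit_val_inj:
  assumes "a \<in> digits p m n" "b \<in> digits p m n" "digit_val p m n a = digit_val p m n b"
  shows "a = b"
  using assms
proof (induction n arbitrary: a b)
  case 0 then show ?case by (simp add: digits_def)
next
  case (Suc n)
  let ?a = "restrict a {1..n}" and ?b = "restrict b {1..n}"
  have bound: "digit_val p m n x < p ^ (m * n)" if "x \<in> digits p m (Suc n)" for x
    using that unfolding digits_def by (intro digit_val_less) auto
  have pos: "p ^ (m * n) \<noteq> 0" using bound[OF Suc.prems(1)] by (metis not_less0)
  let ?x = "digit_val p m (Suc n) a"
  \<comment> \<open>the lower digits and the last digit are recovered as remainder and quotient\<close>
  have "?x mod p ^ (m * n) = digit_val p m n a" "?x div p ^ (m * n) = nat (a (Suc n))"
    using bound[OF Suc.prems(1)] digit_val_Suc[of p m n a] pos by (auto simp: div_mult_self1)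
  moreover have "?x mod p ^ (m * n) = digit_val p m n b" "?x div p ^ (m * n) = nat (b (Suc n))"
    using bound[OF Suc.prems(2)] digit_val_Suc[of p m n b] Suc.prems(3) pos by (auto simp: div_mult_self1)
  moreover have "digit_val p m n ?a = digit_val p m n a" "digit_val p m n ?b = digit_val p m n b"
    by (rule digit_val_cong; simp)+
  ultimately have lower: "digit_val p m n ?a = digit_val p m n ?b" and last: "nat (a (Suc n)) = nat (b (Suc n))"
    by simp_all
  have "?a = ?b" using Suc.prems(1,2) by (intro Suc.IH[OF _ _ lower]) (auto simp: digits_def)
  moreover have "a (Suc n) \<ge> 0" "b (Suc n) \<ge> 0" using Suc.prems(1,2) unfolding digits_def by (auto simp: PiE_iff)
  then have "a (Suc n) = b (Suc n)" using last by simp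
  ultimately show ?case using Suc.prems(1,2) unfolding digits_def
    by (intro PiE_ext[of _ "{1..Suc n}" "\<lambda>_. {0..<int (p ^ m)}"])
      (auto simp: fun_eq_iff le_Suc_eq restrict_def split: if_splits)
qed

lemma ceiling_div_le:
  fixes m M n :: nat
  assumes "1 \<le> m" "M \<le> m * n"
  shows "(M + m - 1) div m \<le> n"
proof -
  have "M + m - 1 < m * (n + 1)" using assms by (simp add: algebra_simps)
  then have "(M + m - 1) div m < n + 1" using assms(1) by (simp add: div_less_iff_less_mult mult.commute)
  then show ?thesis by simp
qed

lemma le_mult_ceiling_div:
  fixes m M :: nat
  assumes "1 \<le> m"
  shows "M \<le> m * ((M + m - 1) div m)"
  using mult_div_mod_eq[of m "M + m - 1"] mod_less_divisor[of m "M + m - 1"] assms by linarith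

section \<open>The Amice transform of the digit measure\<close>

text \<open>Of the groups \<open>G n\<close> and the maps \<open>\<rho> n\<close>, only finiteness and the range \<open>{0..<p^m}\<close> of the
  \<open>\<rho> n\<close> enter the argument.\<close>
locale digit_measure =
  uniformized_local_field v K \<pi> e + p_adic_roots v p \<zeta>
  for v :: "'a::field_char_0 \<Rightarrow> ereal" and K \<pi> e p \<zeta> +
  fixes m :: nat and G :: "nat \<Rightarrow> ('g, 'b) monoid_scheme" and \<rho> :: "nat \<Rightarrow> 'g \<Rightarrow> int"
    and \<nu> :: "nat set \<Rightarrow> (nat \<Rightarrow> 'g) \<Rightarrow> 'a"
  assumes m_pos: "1 \<le> m"
    and finite_carrier: "\<And>n. 1 \<le> n \<Longrightarrow> finite (carrier (G n))"
    and \<rho>_range: "\<And>n x. 1 \<le> n \<Longrightarrow> x \<in> carrier (G n) \<Longrightarrow> 0 \<le> \<rho> n x \<and> \<rho> n x < int (p ^ m)"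
    and \<nu>: "hor_elem (int_ring v K) G \<nu>"
begin

abbreviation \<rho>\<nu> :: "nat \<Rightarrow> (nat \<Rightarrow> int) \<Rightarrow> 'a" where
  "\<rho>\<nu> \<equiv> push_dig G \<rho> \<nu>"

abbreviation amice_transform :: "'a fps" where
  "amice_transform \<equiv> amice p v (push_Zp p m \<rho>\<nu>)"

definition tuples :: "nat \<Rightarrow> (nat \<Rightarrow> 'g) set" where
  "tuples n = PiE {1..n} (\<lambda>i. carrier (G i))"

definition tuple_digits :: "nat \<Rightarrow> (nat \<Rightarrow> 'g) \<Rightarrow> nat \<Rightarrow> int" where
  "tuple_digits n g = restrict (\<lambda>i. \<rho> i (g i)) {1..n}"

definition tuple_val :: "nat \<Rightarrow> (nat \<Rightarrow> 'g) \<Rightarrow> nat" where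
  "tuple_val n g = digit_val p m n (\<lambda>i. \<rho> i (g i))"

lemma finite_tuples: "finite (tuples n)"
  unfolding tuples_def using finite_carrier by (intro finite_PiE) auto

lemma tuple_digits_in_digits: "g \<in> tuples n \<Longrightarrow> tuple_digits n g \<in> digits p m n"
  unfolding tuple_digits_def digits_def tuples_def using \<rho>_range by (auto simp: PiE_iff)

lemma \<nu>_in_int_ring: "g \<in> tuples n \<Longrightarrow> \<nu> {1..n} g \<in> \<O>"
  using \<nu> unfolding hor_elem_def tuples_def by auto

lemma digit_val_tuple_digits: "digit_val p m n (tuple_digits n g) = tuple_val n g"
  unfolding tuple_val_def tuple_digits_def by (rule digit_val_cong) simp

lemma tuple_val_less: "g \<in> tuples n' \<Longrightarrow> n \<le> n' \<Longrightarrow> tuple_val n g < p ^ (m * n)"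
  unfolding tuple_val_def tuples_def by (intro digit_val_less \<rho>_range) (auto simp: PiE_iff)

lemma tuple_val_mod_eq: "n \<le> n' \<Longrightarrow> M \<le> m * n \<Longrightarrow> tuple_val n' g mod p ^ M = tuple_val n g mod p ^ M"
  unfolding tuple_val_def by (rule digit_val_mod_eq)

lemma sum_tuples_restrict:
  assumes "n \<le> n'"
  shows "(\<Sum>g\<in>tuples n. H g * \<nu> {1..n} g) = (\<Sum>y\<in>tuples n'. H (restrict y {1..n}) * \<nu> {1..n'} y)"
proof -
  have sub: "{1..n} \<subseteq> {1..n'}" using assms by auto
  have "H g * \<nu> {1..n} g = (\<Sum>y\<in>{y\<in>tuples n'. restrict y {1..n} = g}. H (restrict y {1..n}) * \<nu> {1..n'} y)"
    if "g \<in> tuples n" for g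
  proof -
    have "\<nu> {1..n} g = (\<Sum>y\<in>{y\<in>tuples n'. restrict y {1..n} = g}. \<nu> {1..n'} y)"
      using \<nu> sub that unfolding hor_elem_def tuples_def by auto
    then show ?thesis by (simp add: sum_distrib_left)
  qed
  then have "(\<Sum>g\<in>tuples n. H g * \<nu> {1..n} g)
      = (\<Sum>g\<in>tuples n. \<Sum>y\<in>{y\<in>tuples n'. restrict y {1..n} = g}. H (restrict y {1..n}) * \<nu> {1..n'} y)"
    by (rule sum.cong[OF refl])
  also have "\<dots> = (\<Sum>y\<in>tuples n'. H (restrict y {1..n}) * \<nu> {1..n'} y)"
    using sub by (intro sum.group finite_tuples) (auto simp: tuples_def PiE_iff)
  finally show ?thesis .
qed

lemma sum_push_dig:
  "(\<Sum>a\<in>digits p m n. F a * \<rho>\<nu> n a) = (\<Sum>g\<in>tuples n. F (tuple_digits n g) * \<nu> {1..n} g)"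
proof -
  have fiber: "{g \<in> PiE {1..n} (\<lambda>i. carrier (G i)). \<forall>i\<in>{1..n}. \<rho> i (g i) = a i}
      = {g\<in>tuples n. tuple_digits n g = a}" if "a \<in> digits p m n" for a
    using that unfolding tuple_digits_def digits_def tuples_def
    by (auto simp: fun_eq_iff PiE_iff restrict_def extensional_def)
  have "F a * \<rho>\<nu> n a = (\<Sum>g\<in>{g\<in>tuples n. tuple_digits n g = a}. F (tuple_digits n g) * \<nu> {1..n} g)"
    if "a \<in> digits p m n" for a
    unfolding push_dig_def fiber[OF that] by (simp add: sum_distrib_left)
  then have "(\<Sum>a\<in>digits p m n. F a * \<rho>\<nu> n a)
      = (\<Sum>a\<in>digits p m n. \<Sum>g\<in>{g\<in>tuples n. tuple_digits n g = a}. F (tuple_digits n g) * \<nu> {1..n} g)"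
    by (rule sum.cong[OF refl])
  also have "\<dots> = (\<Sum>g\<in>tuples n. F (tuple_digits n g) * \<nu> {1..n} g)"
    by (rule sum.group[OF finite_tuples finite_digits]) (auto simp: tuple_digits_in_digits)
  finally show ?thesis .
qed

lemma sum_push_dig_lift:
  assumes "n \<le> n'"
  shows "(\<Sum>a\<in>digits p m n. F a * \<rho>\<nu> n a) = (\<Sum>y\<in>tuples n'. F (tuple_digits n y) * \<nu> {1..n'} y)"
proof -
  have "tuple_digits n (restrict y {1..n}) = tuple_digits n y" for y
    unfolding tuple_digits_def by (rule restrict_ext) simp
  then show ?thesis using sum_push_dig sum_tuples_restrict[OF assms] by simp
qed

definition riemann_binom :: "nat \<Rightarrow> nat \<Rightarrow> 'a" where
  "riemann_binom k M = (\<Sum>x<p ^ M. of_nat (x choose k) * push_Zp p m \<rho>\<nu> M x)"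

lemma riemann_binom_lift:
  assumes "M \<le> m * n'"
  shows "riemann_binom k M = (\<Sum>y\<in>tuples n'. of_nat ((tuple_val n' y mod p ^ M) choose k) * \<nu> {1..n'} y)"
proof -
  define n where "n = (M + m - 1) div m"
  have nn': "n \<le> n'" unfolding n_def using ceiling_div_le[OF m_pos assms] .
  have Mn: "M \<le> m * n" unfolding n_def using le_mult_ceiling_div[OF m_pos] .
  have "riemann_binom k M = (\<Sum>x<p ^ M. \<Sum>a\<in>{a\<in>digits p m n. digit_val p m n a mod p ^ M = x}.
            of_nat ((digit_val p m n a mod p ^ M) choose k) * \<rho>\<nu> n a)"
    unfolding riemann_binom_def push_Zp_def Let_def n_def[symmetric]
    by (intro sum.cong refl) (auto simp: sum_distrib_left)
  also have "\<dots> = (\<Sum>a\<in>digits p m n. of_nat ((digit_val p m n a mod p ^ M) choose k) * \<rho>\<nu> n a)"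
    using p_gt_1 by (intro sum.group finite_digits) auto
  also have "\<dots> = (\<Sum>y\<in>tuples n'. of_nat ((tuple_val n' y mod p ^ M) choose k) * \<nu> {1..n'} y)"
    by (simp add: sum_push_dig_lift[OF nn'] digit_val_tuple_digits tuple_val_mod_eq[OF nn' Mn])
  finally show ?thesis .
qed

lemma riemann_binom_in_int_ring: "riemann_binom k M \<in> \<O>"
proof -
  have "1 * M \<le> m * M" using m_pos by (rule mult_le_mono1)
  then have "M \<le> m * M" by simp
  then show ?thesis unfolding riemann_binom_lift[OF \<open>M \<le> m * M\<close>]
    using \<nu>_in_int_ring by (auto intro!: int_ring_sum int_ring_mult int_ring_of_nat)
qed

lemma riemann_binom_step: "\<exists>C. \<forall>M. ereal (real M - C) \<le> v (riemann_binom k (Suc M) - riemann_binom k M)"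
proof -
  obtain C where C: "\<And>M x y. x mod p ^ M = y mod p ^ M \<Longrightarrow>
      ereal (real M - C) \<le> v (of_nat (x choose k) - of_nat (y choose k))"
    using v_binomial_diff_ge[of k] by blast
  have "ereal (real M - C) \<le> v (riemann_binom k (Suc M) - riemann_binom k M)" for M
  proof -
    let ?d = "\<lambda>y. tuple_val (Suc M) y"
    have "1 * Suc M \<le> m * Suc M" using m_pos by (rule mult_le_mono1)
    then have le: "Suc M \<le> m * Suc M" "M \<le> m * Suc M" by simp_all
    have "riemann_binom k (Suc M) - riemann_binom k M = (\<Sum>y\<in>tuples (Suc M).
        (of_nat ((?d y mod p ^ Suc M) choose k) - of_nat ((?d y mod p ^ M) choose k)) * \<nu> {1..Suc M} y)"
      unfolding riemann_binom_lift[OF le(1)] riemann_binom_lift[OF le(2)]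
      by (simp add: sum_subtractf left_diff_distrib)
    also have "ereal (real M - C) \<le> v \<dots>"
    proof (rule v_sum_ge)
      fix y assume y: "y \<in> tuples (Suc M)"
      have "(?d y mod p ^ Suc M) mod p ^ M = (?d y mod p ^ M) mod p ^ M"
        by (simp add: mod_mod_cancel le_imp_power_dvd)
      then have "ereal (real M - C) + 0 \<le> v (of_nat ((?d y mod p ^ Suc M) choose k)
          - of_nat ((?d y mod p ^ M) choose k)) + v (\<nu> {1..Suc M} y)"
        using C \<nu>_in_int_ring[OF y] by (intro add_mono) (auto simp: int_ring_iff)
      then show "ereal (real M - C) \<le> v ((of_nat ((?d y mod p ^ Suc M) choose k)
          - of_nat ((?d y mod p ^ M) choose k)) * \<nu> {1..Suc M} y)" by (simp add: v_mult)
    qed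
    finally show ?thesis .
  qed
  then show ?thesis by blast
qed

lemma amice_coeff_limit: "vconv v (riemann_binom k) (fps_nth amice_transform k)"
proof -
  obtain C where "\<And>M. ereal (real M - C) \<le> v (riemann_binom k (Suc M) - riemann_binom k M)"
    using riemann_binom_step by blast
  moreover have "\<exists>N. B \<le> real N - C" for B by (rule exI[of _ "nat \<lceil>B + C\<rceil>"]) linarith
  moreover have "mono (\<lambda>M::nat. real M - C)" by (intro monoI) simp
  ultimately obtain c where c: "vconv v (riemann_binom k) c" by (metis vconv_if_consecutive_diff)
  have "fps_nth amice_transform k = (THE c. vconv v (riemann_binom k) c)"
    unfolding amice_def Zp_integral_def riemann_binom_def by simp
  also have "\<dots> = c" using c vconv_unique by blast
  finally show ?thesis using c by simp
qed

lemma in_RT_amice: "in_RT \<O> amice_transform"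
  unfolding in_RT_def using int_ring_closed amice_coeff_limit riemann_binom_in_int_ring
  unfolding vclosed_def by blast

lemma amice_eq_zero_if_measure_zero:
  assumes "\<forall>n. \<forall>a\<in>digits p m n. \<rho>\<nu> n a = 0"
  shows "amice_transform = 0"
proof -
  have "riemann_binom k = (\<lambda>M. 0)" for k
    using assms by (simp add: fun_eq_iff riemann_binom_def push_Zp_def Let_def)
  then have "fps_nth amice_transform k = 0" for k
    using amice_coeff_limit[of k] vconv_const[of 0] vconv_unique by metis
  then show ?thesis by (simp add: fps_ext)
qed

lemma less_p_power: "k < p ^ k"
  using power_gt_expt[of p k] p_gt_1 by simp

definition digit_eval :: "nat \<Rightarrow> 'a \<Rightarrow> 'a" where
  "digit_eval n z = (\<Sum>a\<in>digits p m n. (1 + z) ^ digit_val p m n a * \<rho>\<nu> n a)"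

lemma digit_eval_eq_riemann_sum:
  assumes z: "(1 + z) ^ (p ^ (m * n0)) = 1" and "n0 \<le> n"
  shows "digit_eval n0 z = (\<Sum>k<p ^ (m * n). riemann_binom k (m * n) * z ^ k)"
proof -
  let ?T = "p ^ (m * n)"
  have binomial: "(1 + z) ^ d = (\<Sum>k<?T. of_nat (d choose k) * z ^ k)" if "d < ?T" for d
  proof -
    have "(1 + z) ^ d = (\<Sum>k\<le>d. of_nat (d choose k) * z ^ k)"
      using binomial_ring[of z 1 d] by (simp add: add.commute)
    also have "\<dots> = (\<Sum>k<?T. of_nat (d choose k) * z ^ k)"
      using that by (intro sum.mono_neutral_left) auto
    finally show ?thesis .
  qed
  \<comment> \<open>\<open>1 + z\<close> has order dividing \<open>p^(m n0)\<close>, so only the first \<open>n0\<close> digits matter\<close>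
  have same_power: "(1 + z) ^ tuple_val n0 y = (1 + z) ^ tuple_val n y" for y
    using tuple_val_mod_eq[OF assms(2) order.refl, of y] power_mod_order[OF z] by metis
  have "digit_eval n0 z = (\<Sum>y\<in>tuples n. (1 + z) ^ tuple_val n y * \<nu> {1..n} y)"
    unfolding digit_eval_def sum_push_dig_lift[OF assms(2)]
    by (simp add: digit_val_tuple_digits same_power)
  also have "\<dots> = (\<Sum>y\<in>tuples n. \<Sum>k<?T. of_nat (tuple_val n y choose k) * z ^ k * \<nu> {1..n} y)"
    using tuple_val_less[OF _ order.refl] by (simp add: binomial sum_distrib_right)
  also have "\<dots> = (\<Sum>k<?T. riemann_binom k (m * n) * z ^ k)"
  proof -
    have "riemann_binom k (m * n) = (\<Sum>y\<in>tuples n. of_nat (tuple_val n y choose k) * \<nu> {1..n} y)" for k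
      unfolding riemann_binom_lift[OF order.refl] using tuple_val_less[OF _ order.refl]
      by (intro sum.cong refl) simp
    then show ?thesis by (subst sum.swap) (simp add: sum_distrib_left sum_distrib_right algebra_simps)
  qed
  finally show ?thesis .
qed

lemma amice_coeffs_uniform:
  "\<exists>N. \<forall>k<L. \<forall>M\<ge>N. ereal B \<le> v (riemann_binom k M - fps_nth amice_transform k)"
proof (induction L)
  case (Suc L)
  then obtain N1 where "\<forall>k<L. \<forall>M\<ge>N1. ereal B \<le> v (riemann_binom k M - fps_nth amice_transform k)"
    by blast
  moreover obtain N2 where "\<forall>M\<ge>N2. ereal B \<le> v (riemann_binom L M - fps_nth amice_transform L)"
    using amice_coeff_limit[of L] unfolding vconv_def by blast
  ultimately have "\<forall>k<Suc L. \<forall>M\<ge>max N1 N2. ereal B \<le> v (riemann_binom k M - fps_nth amice_transform k)"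
    by (auto simp: less_Suc_eq)
  then show ?case by blast
qed simp

lemma digit_eval_approx:
  assumes z: "(1 + z) ^ (p ^ (m * n0)) = 1" and s: "0 < s" "ereal s \<le> v z"
  shows "ereal (real L * s) \<le> v (digit_eval n0 z - (\<Sum>k<L. fps_nth amice_transform k * z ^ k))"
proof -
  obtain N where N: "\<forall>k<L. \<forall>M\<ge>N. ereal (real L * s) \<le> v (riemann_binom k M - fps_nth amice_transform k)"
    using amice_coeffs_uniform by blast
  define n where "n = max n0 (max N L)"
  let ?M = "m * n" and ?T = "p ^ (m * n)"
  have "n \<le> ?M" using m_pos by simp
  then have NM: "N \<le> ?M" and LT: "L \<le> ?T"
    using less_p_power[of ?M] unfolding n_def by linarith+
  have "digit_eval n0 z - (\<Sum>k<L. fps_nth amice_transform k * z ^ k)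
      = (\<Sum>k<L. (riemann_binom k ?M - fps_nth amice_transform k) * z ^ k)
        + (\<Sum>k\<in>{L..<?T}. riemann_binom k ?M * z ^ k)"
  proof -
    have "(\<Sum>k<?T. riemann_binom k ?M * z ^ k)
        = (\<Sum>k<L. riemann_binom k ?M * z ^ k) + (\<Sum>k\<in>{L..<?T}. riemann_binom k ?M * z ^ k)"
      using LT by (simp add: lessThan_atLeast0 sum.atLeastLessThan_concat)
    moreover have "n0 \<le> n" unfolding n_def by simp
    ultimately show ?thesis unfolding digit_eval_eq_riemann_sum[OF z \<open>n0 \<le> n\<close>]
      by (simp add: sum_subtractf left_diff_distrib)
  qed
  moreover have "ereal (real L * s) \<le> v (\<Sum>k<L. (riemann_binom k ?M - fps_nth amice_transform k) * z ^ k)"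
  proof (rule v_sum_ge)
    fix k assume "k \<in> {..<L}"
    then have "ereal (real L * s) + 0 \<le> v (riemann_binom k ?M - fps_nth amice_transform k) + v (z ^ k)"
      using N NM s by (intro add_mono v_power_nonneg) (auto intro: order_trans[of 0 "ereal s"])
    then show "ereal (real L * s) \<le> v ((riemann_binom k ?M - fps_nth amice_transform k) * z ^ k)"
      by (simp add: v_mult)
  qed
  moreover have "ereal (real L * s) \<le> v (\<Sum>k\<in>{L..<?T}. riemann_binom k ?M * z ^ k)"
  proof (rule v_sum_ge)
    fix k assume k: "k \<in> {L..<?T}"
    have "ereal (real L * s) \<le> ereal (real k * s)" using k s by (simp add: mult_right_mono)
    also have "\<dots> \<le> v (z ^ k)" using v_power_ge[OF s(2)] .
    finally have "0 + ereal (real L * s) \<le> v (riemann_binom k ?M) + v (z ^ k)"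
      using riemann_binom_in_int_ring by (intro add_mono) (auto simp: int_ring_iff)
    then show "ereal (real L * s) \<le> v (riemann_binom k ?M * z ^ k)" by (simp add: v_mult)
  qed
  ultimately show ?thesis by (simp add: v_add_ge)
qed

lemma v_digit_eval:
  assumes wf: "weierstrass_fact \<O> \<pi> amice_transform mu lam"
    and z: "(1 + z) ^ (p ^ (m * n0)) = 1" and vz: "v z = ereal s" and s: "0 < s"
    and small: "real lam * s < 1 / real e"
  shows "v (digit_eval n0 z) = ereal (real mu / real e + real lam * s)"
proof -
  define t where "t = real mu / real e + real lam * s"
  define L where "L = nat \<lceil>t / s\<rceil> + lam + 1"
  let ?P = "\<Sum>k<L. fps_nth amice_transform k * z ^ k"
  have "t / s < real L" unfolding L_def by linarith
  then have "t < real L * s" using s by (simp add: field_simps)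
  moreover have vP: "v ?P = ereal t"
    unfolding t_def by (rule v_weierstrass_truncation[OF wf vz s small]) (simp add: L_def)
  ultimately have "v ?P < v (digit_eval n0 z - ?P)"
    using digit_eval_approx[OF z s, of L] vz by (auto intro: less_le_trans[of _ "ereal (real L * s)"])
  then show ?thesis using v_add_strict[of ?P "digit_eval n0 z - ?P"] vP unfolding t_def by simp
qed

lemma digit_eval_zeta_vanishes:
  assumes "amice_transform = 0"
  shows "digit_eval n (\<zeta> (m * n) ^ j - 1) = 0"
proof -
  define z where "z = \<zeta> (m * n) ^ j - 1"
  have z: "(1 + z) ^ (p ^ (m * n)) = 1" unfolding z_def using zeta_power_power_order by simp
  obtain s where s: "0 < s" "ereal s \<le> v z"
  proof (cases "m * n = 0")
    case True
    have "\<zeta> (m * n) = 1" unfolding True using zeta_power_order[of 0] by simp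
    then have "z = 0" by (simp add: z_def)
    then show ?thesis using that[of 1] by simp
  next
    case False
    have "v (\<zeta> (m * n) - 1) \<le> v z"
      unfolding z_def using v_power_minus_one_ge v_root_of_unity[OF zeta_power_order] p_gt_1 by simp
    then show ?thesis using that[of "cyclo_val (m * n)"] cyclo_val_pos v_zeta_minus_one False by simp
  qed
  have "ereal M \<le> v (digit_eval n z)" for M
  proof -
    have "M / s \<le> real (nat \<lceil>M / s\<rceil>)" by linarith
    then have "ereal M \<le> ereal (real (nat \<lceil>M / s\<rceil>) * s)" using s(1) by (simp add: field_simps)
    also have "\<dots> \<le> v (digit_eval n z)" using digit_eval_approx[OF z s] assms by simp
    finally show ?thesis .
  qed
  then show ?thesis unfolding z_def[symmetric] by (rule zero_if_v_unbounded)
qed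

lemma digit_eval_inversion:
  assumes a0: "a0 \<in> digits p m n"
  defines "Q \<equiv> p ^ (m * n)" and "y \<equiv> digit_val p m n a0"
  shows "(\<Sum>j<Q. (\<zeta> (m * n) ^ j) ^ (Q - y) * digit_eval n (\<zeta> (m * n) ^ j - 1)) = of_nat Q * \<rho>\<nu> n a0"
proof -
  have less: "digit_val p m n a < Q" if "a \<in> digits p m n" for a
    unfolding Q_def using that unfolding digits_def by (intro digit_val_less) auto
  have "(\<Sum>j<Q. (\<zeta> (m * n) ^ j) ^ (Q - y) * digit_eval n (\<zeta> (m * n) ^ j - 1))
      = (\<Sum>a\<in>digits p m n. (\<Sum>j<Q. (\<zeta> (m * n) ^ j) ^ (digit_val p m n a + (Q - y))) * \<rho>\<nu> n a)"
    unfolding digit_eval_def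
    by (simp add: sum_distrib_left sum_distrib_right power_add algebra_simps sum.swap[of _ "{..<Q}"])
  also have "\<dots> = (\<Sum>a\<in>digits p m n. if a = a0 then of_nat Q * \<rho>\<nu> n a else 0)"
  proof (intro sum.cong refl)
    fix a assume a: "a \<in> digits p m n"
    have "Q dvd digit_val p m n a + (Q - y) \<longleftrightarrow> a = a0"
      using dvd_add_diff_iff_eq[OF less[OF a] less[OF a0]] digit_val_inj[OF a a0] unfolding y_def by auto
    then show "(\<Sum>j<Q. (\<zeta> (m * n) ^ j) ^ (digit_val p m n a + (Q - y))) * \<rho>\<nu> n a
        = (if a = a0 then of_nat Q * \<rho>\<nu> n a else 0)"
      using sum_zeta_powers[of "m * n"] unfolding Q_def by auto
  qed
  also have "\<dots> = of_nat Q * \<rho>\<nu> n a0" using a0 finite_digits by (simp add: sum.delta')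
  finally show ?thesis .
qed

lemma measure_zero_if_amice_zero:
  assumes "amice_transform = 0" and "a \<in> digits p m n"
  shows "\<rho>\<nu> n a = 0"
  using digit_eval_inversion[OF assms(2)] digit_eval_zeta_vanishes[OF assms(1)] p_gt_1 by simp

definition S_factor :: "nat \<Rightarrow> 'a" where
  "S_factor n = (\<Prod>i=1..n. (\<zeta> (m * (n - i + 2)) - 1) / (\<zeta> (m * (n - i + 2)) ^ (p ^ m) - 1))"

lemma zeta_power_digit_val:
  assumes a: "a \<in> digits p m (n + 1)"
  shows "\<zeta> (m * (n + 1)) ^ digit_val p m (n + 1) a
     = (\<Prod>i=1..n. \<zeta> (m * (n - i + 2)) ^ nat (a i)) * \<zeta> m powi a (n + 1)"
proof -
  have level: "\<zeta> (m * (n + 1)) ^ p ^ (m * (i - 1)) = \<zeta> (m * (n + 2 - i))" if "i \<in> {1..n+1}" for i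
  proof -
    have "m * (n + 2 - i) + m * (i - 1) = m * (n + 1)"
      using that by (simp add: add_mult_distrib2[symmetric])
    then show ?thesis using zeta_add_power[of "m * (n + 2 - i)" "m * (i - 1)"] by simp
  qed
  have "\<zeta> (m * (n + 1)) ^ digit_val p m (n + 1) a
      = (\<Prod>i=1..n+1. \<zeta> (m * (n + 1)) ^ (nat (a i) * p ^ (m * (i - 1))))"
    unfolding digit_val_def by (rule power_sum)
  also have "\<dots> = (\<Prod>i=1..n+1. \<zeta> (m * (n + 2 - i)) ^ nat (a i))"
  proof (rule prod.cong[OF refl])
    fix i assume "i \<in> {1..n+1}"
    then show "\<zeta> (m * (n + 1)) ^ (nat (a i) * p ^ (m * (i - 1))) = \<zeta> (m * (n + 2 - i)) ^ nat (a i)"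
      using level by (metis power_mult mult.commute)
  qed
  also have "\<dots> = (\<Prod>i=1..n. \<zeta> (m * (n + 2 - i)) ^ nat (a i)) * \<zeta> m ^ nat (a (n + 1))"
    by (simp add: prod.cl_ivl_Suc)
  also have "(\<Prod>i=1..n. \<zeta> (m * (n + 2 - i)) ^ nat (a i)) = (\<Prod>i=1..n. \<zeta> (m * (n - i + 2)) ^ nat (a i))"
    by (intro prod.cong refl) (simp add: Suc_diff_le)
  also have "\<zeta> m ^ nat (a (n + 1)) = \<zeta> m powi a (n + 1)"
    using a unfolding digits_def by (simp add: PiE_iff power_int_def)
  finally show ?thesis .
qed

text \<open>The average over character tuples factors into one character sum per digit.\<close>
lemma average_char_tuples:
  assumes a: "a \<in> digits p m (n + 1)"
  shows "1 / of_nat (p ^ (m * n)) * (\<Sum>\<chi>\<in>PiE {1..n} (\<lambda>_. chars (p ^ m)).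
            \<Prod>i=1..n. u_fac m \<zeta> (n - i) (\<chi> i) * \<chi> i (a i))
     = S_factor n * (\<Prod>i=1..n. \<zeta> (m * (n - i + 2)) ^ nat (a i))"
proof -
  let ?w = "\<lambda>i. \<zeta> (m * (n - i + 2))"
  have "(\<Sum>\<chi>\<in>PiE {1..n} (\<lambda>_. chars (p ^ m)). \<Prod>i=1..n. u_fac m \<zeta> (n - i) (\<chi> i) * \<chi> i (a i))
      = (\<Prod>i=1..n. \<Sum>\<chi>\<in>chars (p ^ m). u_fac m \<zeta> (n - i) \<chi> * \<chi> (a i))"
    using finite_chars by (intro prod_sum_PiE[symmetric]) auto
  also have "\<dots> = (\<Prod>i=1..n. of_nat (p ^ m) * ((?w i - 1) * ?w i ^ nat (a i) / (?w i ^ (p ^ m) - 1)))"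
  proof (intro prod.cong refl)
    fix i assume "i \<in> {1..n}"
    then have "0 \<le> a i" "a i < int (p ^ m)" using a unfolding digits_def by (auto simp: PiE_iff)
    then show "(\<Sum>\<chi>\<in>chars (p ^ m). u_fac m \<zeta> (n - i) \<chi> * \<chi> (a i))
        = of_nat (p ^ m) * ((?w i - 1) * ?w i ^ nat (a i) / (?w i ^ (p ^ m) - 1))"
      using sum_chars_u_fac[OF m_pos, of "a i" "n - i"] by (simp add: numeral_2_eq_2)
  qed
  also have "\<dots> = (\<Prod>i=1..n. of_nat (p ^ m)) * (\<Prod>i=1..n. (?w i - 1) * ?w i ^ nat (a i) / (?w i ^ (p ^ m) - 1))"
    by (rule prod.distrib)
  also have "\<dots> = of_nat (p ^ (m * n)) * (S_factor n * (\<Prod>i=1..n. ?w i ^ nat (a i)))"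
    unfolding S_factor_def by (simp add: power_mult prod.distrib[symmetric] algebra_simps)
  finally show ?thesis using p_gt_1 by simp
qed

lemma S_sum_eq: "S_sum p m \<zeta> \<rho>\<nu> n = S_factor n * digit_eval (n + 1) (\<zeta> (m * (n + 1)) - 1)"
proof -
  define CH where "CH = PiE {1..n} (\<lambda>_. chars (p ^ m) :: (int \<Rightarrow> 'a) set)"
  define \<chi>0 where "\<chi>0 = (\<lambda>a::int. \<zeta> m powi a)"
  have last: "(\<Prod>j=1..n+1. (\<chi>(n + 1 := \<chi>0)) j (a j)) = (\<Prod>j=1..n. \<chi> j (a j)) * \<chi>0 (a (n + 1))"
    for \<chi> :: "nat \<Rightarrow> int \<Rightarrow> 'a" and a
  proof -
    have "(\<Prod>j=1..n. (\<chi>(n + 1 := \<chi>0)) j (a j)) = (\<Prod>j=1..n. \<chi> j (a j))"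
      by (intro prod.cong refl) auto
    then show ?thesis by (simp add: prod.cl_ivl_Suc)
  qed
  have "S_sum p m \<zeta> \<rho>\<nu> n = (\<Sum>a\<in>digits p m (n + 1). \<rho>\<nu> (n + 1) a * \<chi>0 (a (n + 1)) *
      (1 / of_nat (p ^ (m * n)) * (\<Sum>\<chi>\<in>CH. \<Prod>i=1..n. u_fac m \<zeta> (n - i) (\<chi> i) * \<chi> i (a i))))"
    unfolding S_sum_def Let_def dig_char_int_def \<chi>0_def[symmetric] CH_def[symmetric] last
    by (simp add: sum_distrib_left sum_distrib_right prod.distrib sum.swap[of _ CH] algebra_simps)
  also have "\<dots> = (\<Sum>a\<in>digits p m (n + 1).
      S_factor n * (\<zeta> (m * (n + 1)) ^ digit_val p m (n + 1) a * \<rho>\<nu> (n + 1) a))"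
  proof (intro sum.cong refl)
    fix a assume a: "a \<in> digits p m (n + 1)"
    show "\<rho>\<nu> (n + 1) a * \<chi>0 (a (n + 1)) *
        (1 / of_nat (p ^ (m * n)) * (\<Sum>\<chi>\<in>CH. \<Prod>i=1..n. u_fac m \<zeta> (n - i) (\<chi> i) * \<chi> i (a i)))
      = S_factor n * (\<zeta> (m * (n + 1)) ^ digit_val p m (n + 1) a * \<rho>\<nu> (n + 1) a)"
      unfolding CH_def average_char_tuples[OF a] zeta_power_digit_val[OF a] \<chi>0_def by (simp add: algebra_simps)
  qed
  also have "\<dots> = S_factor n * digit_eval (n + 1) (\<zeta> (m * (n + 1)) - 1)"
    unfolding digit_eval_def by (simp add: sum_distrib_left)
  finally show ?thesis .
qed

text \<open>The product defining \<open>S_factor n\<close> telescopes in valuation.\<close>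
lemma v_S_factor: "v (S_factor n) = ereal (cyclo_val (m * (n + 1)) - cyclo_val m)"
proof -
  define X where "X j = cyclo_val (m * (j + 1))" for j
  have factor: "v ((\<zeta> (m * (n - i + 2)) - 1) / (\<zeta> (m * (n - i + 2)) ^ (p ^ m) - 1))
      = ereal (X (n - i + 1) - X (n - i))" for i
  proof -
    have "\<zeta> (m * (n - i + 2)) ^ (p ^ m) = \<zeta> (m * (n - i + 1))"
      using zeta_add_power[of "m * (n - i + 1)" m] by (simp add: algebra_simps)
    moreover have "1 \<le> m * (n - i + 2)" "1 \<le> m * (n - i + 1)" using m_pos by simp_all
    ultimately have "v (\<zeta> (m * (n - i + 2)) - 1) = ereal (X (n - i + 1))"
      "v (\<zeta> (m * (n - i + 2)) ^ (p ^ m) - 1) = ereal (X (n - i))"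
      unfolding X_def using v_zeta_minus_one by (simp_all add: algebra_simps)
    moreover from this(2) have "\<zeta> (m * (n - i + 2)) ^ (p ^ m) - 1 \<noteq> 0" by auto
    ultimately show ?thesis by (simp add: v_divide)
  qed
  have "v (S_factor n) = (\<Sum>i=1..n. v ((\<zeta> (m * (n - i + 2)) - 1) / (\<zeta> (m * (n - i + 2)) ^ (p ^ m) - 1)))"
    unfolding S_factor_def by (rule v_prod) simp
  also have "\<dots> = (\<Sum>i=1..n. ereal (X (n - i + 1) - X (n - i)))" by (intro sum.cong refl) (rule factor)
  also have "\<dots> = ereal (\<Sum>i=1..n. X (n - i + 1) - X (n - i))" by (simp add: sum_ereal)
  also have "(\<Sum>i=1..n. X (n - i + 1) - X (n - i)) = (\<Sum>j<n. X (Suc j) - X j)"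
    by (rule sum.reindex_bij_witness[of _ "\<lambda>j. n - j" "\<lambda>i. n - i"]) auto
  also have "\<dots> = X n - X 0" by (rule sum_lessThan_telescope)
  finally show ?thesis unfolding X_def by simp
qed

lemma lambda_cyclo_val_small:
  assumes "lam * e \<le> n"
  shows "real lam * cyclo_val (m * (n + 1)) < 1 / real e"
proof -
  have "real (lam * e) < real p ^ (m * (n + 1) - 1)"
  proof -
    have "n \<le> m * (n + 1) - 1" using m_pos mult_le_mono1[of 1 m "n + 1"] by simp
    then have "p ^ n \<le> p ^ (m * (n + 1) - 1)" using p_gt_1 by (simp add: power_increasing)
    then have "lam * e < p ^ (m * (n + 1) - 1)" using assms less_p_power[of n] by linarith
    then show ?thesis by (metis of_nat_less_iff of_nat_power)
  qed
  also have "\<dots> \<le> (real p - 1) * real p ^ (m * (n + 1) - 1)" using p_gt_1 by simp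
  finally show ?thesis using e_pos p_gt_1 by (simp add: cyclo_val_def field_simps)
qed

lemma v_S_sum:
  assumes wf: "weierstrass_fact \<O> \<pi> amice_transform mu lam" and n: "lam * e \<le> n"
  shows "v (S_sum p m \<zeta> \<rho>\<nu> n) =
    ereal (real mu / real e - 1 / (real p ^ m - real p ^ (m - 1))
      + (real lam + 1) / (real p ^ (m * (n + 1)) - real p ^ (m * (n + 1) - 1)))"
proof -
  define N where "N = m * (n + 1)"
  have N: "1 \<le> N" unfolding N_def using m_pos by simp
  have z: "(1 + (\<zeta> N - 1)) ^ (p ^ (m * (n + 1))) = 1" unfolding N_def using zeta_power_order by simp
  have "v (S_sum p m \<zeta> \<rho>\<nu> n) = v (S_factor n) + v (digit_eval (n + 1) (\<zeta> N - 1))"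
    unfolding S_sum_eq N_def by (simp add: v_mult)
  also have "\<dots> = ereal (cyclo_val N - cyclo_val m + (real mu / real e + real lam * cyclo_val N))"
    using v_digit_eval[OF wf z v_zeta_minus_one[OF N] cyclo_val_pos] lambda_cyclo_val_small[OF n]
    unfolding v_S_factor N_def by simp
  finally show ?thesis
    using cyclo_val_eq[OF m_pos] cyclo_val_eq[OF N] unfolding N_def by (simp add: algebra_simps add_divide_distrib)
qed

theorem S_sum_valuation:
  assumes "\<exists>n. \<exists>a\<in>digits p m n. \<rho>\<nu> n a \<noteq> 0"
  shows "\<exists>mu::nat. weier_mu \<O> \<pi> amice_transform = enat mu \<and>
    (\<exists>N0. \<forall>n\<ge>N0. v (S_sum p m \<zeta> \<rho>\<nu> n) =
      ereal (real mu / real e - 1 / (real p ^ m - real p ^ (m - 1))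
        + (real (weier_lambda \<O> \<pi> amice_transform) + 1)
          / (real p ^ (m * (n + 1)) - real p ^ (m * (n + 1) - 1))))"
proof -
  have nz: "amice_transform \<noteq> 0" using assms measure_zero_if_amice_zero by blast
  obtain mu lam where wf: "weierstrass_fact \<O> \<pi> amice_transform mu lam"
    using weierstrass_fact_exists[OF in_RT_amice nz] .
  show ?thesis
    using weier_invariants_eq[OF wf nz] v_S_sum[OF wf] by blast
qed

theorem S_sum_zero_measure:
  assumes "\<forall>n. \<forall>a\<in>digits p m n. \<rho>\<nu> n a = 0"
  shows "weier_mu \<O> \<pi> amice_transform = \<infinity>" and "\<forall>n\<ge>1. S_sum p m \<zeta> \<rho>\<nu> n = 0"
  using amice_eq_zero_if_measure_zero[OF assms] assms
  by (simp_all add: weier_mu_def S_sum_def dig_char_int_def)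

end

theorem proposition3p4:
  fixes p m e :: nat
    and v :: "'a::field_char_0 \<Rightarrow> ereal"
    and K :: "'a set"
    and \<pi> :: 'a
    and \<zeta> :: "nat \<Rightarrow> 'a"
    and G :: "nat \<Rightarrow> ('g, 'b) monoid_scheme"
    and \<rho> :: "nat \<Rightarrow> 'g \<Rightarrow> int"
    and \<nu> :: "nat set \<Rightarrow> (nat \<Rightarrow> 'g) \<Rightarrow> 'a"
  defines "R \<equiv> int_ring v K"
  defines "\<rho>\<nu> \<equiv> push_dig G \<rho> \<nu>"
  defines "f \<equiv> amice p v (push_Zp p m \<rho>\<nu>)"
  assumes Cp: "Cp_like p v"
    and K: "finite_ext_Qp v K"
    and unif: "uniformizer v K \<pi>"
    and ram: "ram_index v \<pi> e"
    and roots: "compatible_roots p \<zeta>"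
    and m: "1 \<le> m"
    and G: "\<And>n. 1 \<le> n \<Longrightarrow> comm_group (G n) \<and> finite (carrier (G n))"
    and \<rho>: "\<And>n. 1 \<le> n \<Longrightarrow> \<rho> n \<in> hom (G n) (integer_mod_group (p ^ m)) \<and>
                          \<rho> n ` carrier (G n) = carrier (integer_mod_group (p ^ m))"
    and \<nu>: "hor_elem R G \<nu>"
  shows "((\<exists>n. \<exists>a\<in>digits p m n. \<rho>\<nu> n a \<noteq> 0) \<longrightarrow>
            (\<exists>mu::nat. weier_mu R \<pi> f = enat mu \<and>
               (\<exists>N0. \<forall>n\<ge>N0.
                  v (S_sum p m \<zeta> \<rho>\<nu> n) =
                    ereal (real mu / real e - 1 / (real p ^ m - real p ^ (m - 1))
                      + (real (weier_lambda R \<pi> f) + 1)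
                        / (real p ^ (m * (n + 1)) - real p ^ (m * (n + 1) - 1))))))
       \<and> ((\<forall>n. \<forall>a\<in>digits p m n. \<rho>\<nu> n a = 0) \<longrightarrow>
            weier_mu R \<pi> f = \<infinity> \<and> (\<forall>n\<ge>1. S_sum p m \<zeta> \<rho>\<nu> n = 0))"
proof -
  have p: "prime p" "valuation v" "v (of_nat p) = 1" "vcomplete v"
    using Cp unfolding Cp_like_def by auto
  have \<rho>_range: "0 \<le> \<rho> n x \<and> \<rho> n x < int (p ^ m)" if "1 \<le> n" "x \<in> carrier (G n)" for n x
  proof -
    have "\<rho> n x \<in> carrier (integer_mod_group (p ^ m))"
      using \<rho>[OF that(1)] that(2) unfolding hom_def by auto
    then show ?thesis using prime_gt_0_nat[OF p(1)] by (simp add: carrier_integer_mod_group)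
  qed
  interpret digit_measure v K \<pi> e p \<zeta> m G \<rho> \<nu>
    by unfold_locales (use p K unif ram roots m G \<rho>_range \<nu> in \<open>auto simp: R_def\<close>)
  show ?thesis
    using S_sum_valuation S_sum_zero_measure unfolding R_def \<rho>\<nu>_def f_def by blast
qed

end
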